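(* Let $G$ be a finite group of order $n$, $k\ge1$, and write $L_j,L_j^-,L_j^+$ for the Laplacians of $Y_{G,k}$. (i) For $0\le j\le k$, the eigenvalues of $L_j$ on $C^j(Y_{G,k})$ are exactly $\{tn: k-j\le t\le k+1\}$, and the multiplicity of $tn$ is $\binom{k+1}{t}\binom{t}{k-j}(n-1)^{k+1-t}$. (ii) For $0\le j\le k$, the eigenvalues of $L_j^-$ restricted to $\operatorname{im} d_{j-1}$ are exactly $\{tn:k-j+1\le t\le k+1\}$, with multiplicity of $tn$ equal to $\binom{k+1}{t}\binom{t-1}{k-j}(n-1)^{k+1-t}$. For $0\le j\le k-1$, the eigenvalues of $L_j^+$ restricted to $\operatorname{im} d_j^*$ are exactly $\{tn:k-j\le t\le k+1\}$, with multiplicity of $tn$ equal to $\binom{k+1}{t}\binom{t-1}{k-j-1}(n-1)^{k+1-t}$.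
   Context: Let $G$ be a finite group of order $n$ and $k\ge1$. For $1\le i\le k+1$ let $V_i=\{i\}\times G$, viewed as a $0$-dimensional complex. $Y_{G,k}$ denotes the simplicial join $V_1*\cdots*V_{k+1}$, i.e. the simplicial complex on vertex set $V_1\cup\cdots\cup V_{k+1}$ whose simplices are the sets containing at most one vertex from each $V_i$. For a simplicial complex $X$ and $j\ge0$, $C^j(X)$ is the real vector space of real-valued skew-symmetric functions on ordered $j$-simplices, $C^{-1}(X)=\mathbb R$; the coboundary $d_j:C^j\to C^{j+1}$ is $d_j\phi([v_0,\dots,v_{j+1}])=\sum_i(-1)^i\phi([v_0,\dots,\widehat{v_i},\dots,v_{j+1}])$, and $d_{-1}(a)(v)=a$. Each $C^j(X)$ has the standard inner product $(\phi,\psi)_X=\sum_{\sigma\in X(j)}\phi(\sigma)\psi(\sigma)$, and $d_j^*$ denotes the adjoint. The lower and upper Laplacians are $L_j^-=d_{j-1}d_{j-1}^*$ and $L_j^+=d_j^*d_j$ on $C^j(X)$, and $L_j=L_j^-+L_j^+$. Note $L_j^-$ preserves $\operatorname{im} d_{j-1}$ and $L_j^+$ preserves $\operatorname{im} d_j^*$. Binomial coefficients $\binom{a}{b}$ with $b<0$ or $b>a$ are $0$. *)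

theory Defs
  imports Complex_Main "HOL-Algebra.Coset" "HOL-Library.Function_Algebras"
begin

section \<open>The complex Y_{G,k} = V_1 * ... * V_{k+1}, V_i = {i} x G\<close>

type_synonym 'a vtx = "nat \<times> 'a"
type_synonym 'a cochain = "'a vtx set \<Rightarrow> real"

definition join_vertices :: "nat \<Rightarrow> 'a set \<Rightarrow> 'a vtx set" where
  "join_vertices k A = {1..k+1} \<times> A"

text \<open>Faces with m vertices (i.e. (m-1)-simplices) of Y: sets of vertices with at most
  one vertex from each V_i. m = 0 gives the empty face, used for C^{-1}.\<close>
definition faces :: "nat \<Rightarrow> 'a set \<Rightarrow> nat \<Rightarrow> 'a vtx set set" where
  "faces k A m = {S. S \<subseteq> join_vertices k A \<and> card S = m \<and>
      (\<forall>v\<in>S. \<forall>w\<in>S. fst v = fst w \<longrightarrow> v = w)}"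

text \<open>Each simplex is
  identified with its ordered representative listing the vertices by increasing part index
  (a skew-symmetric function is determined by its values on these).  For m = 0 this is
  C^{-1} = R (functions on the empty face).\<close>
definition cochains :: "nat \<Rightarrow> 'a set \<Rightarrow> nat \<Rightarrow> 'a cochain set" where
  "cochains k A m = {f. \<forall>S. S \<notin> faces k A m \<longrightarrow> f S = 0}"

definition vsign :: "'a vtx \<Rightarrow> 'a vtx set \<Rightarrow> real" where
  "vsign v T = (-1) ^ card {w\<in>T. fst w < fst v}"

text \<open>Coboundary d from faces with m vertices to faces with m+1 vertices
  (d_j with m = j+1; m = 0 gives d_{-1}(a)(v) = a).\<close>
definition cobound :: "nat \<Rightarrow> 'a set \<Rightarrow> nat \<Rightarrow> 'a cochain \<Rightarrow> 'a cochain" where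
  "cobound k A m f = (\<lambda>T. if T \<in> faces k A (m+1)
       then (\<Sum>v\<in>T. vsign v T * f (T - {v})) else 0)"

text \<open>Adjoint of cobound w.r.t. the standard inner products (sum over faces).\<close>
definition cobound_adj :: "nat \<Rightarrow> 'a set \<Rightarrow> nat \<Rightarrow> 'a cochain \<Rightarrow> 'a cochain" where
  "cobound_adj k A m g = (\<lambda>S. if S \<in> faces k A m
       then (\<Sum>v\<in>{v\<in>join_vertices k A - S. insert v S \<in> faces k A (m+1)}.
               vsign v (insert v S) * g (insert v S)) else 0)"

text \<open>Laplacians on C^j, j = m - 1 (m \<ge> 1).\<close>
definition lap_down :: "nat \<Rightarrow> 'a set \<Rightarrow> nat \<Rightarrow> 'a cochain \<Rightarrow> 'a cochain" where
  "lap_down k A m f = cobound k A (m-1) (cobound_adj k A (m-1) f)"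

definition lap_up :: "nat \<Rightarrow> 'a set \<Rightarrow> nat \<Rightarrow> 'a cochain \<Rightarrow> 'a cochain" where
  "lap_up k A m f = cobound_adj k A m (cobound k A m f)"

definition lap :: "nat \<Rightarrow> 'a set \<Rightarrow> nat \<Rightarrow> 'a cochain \<Rightarrow> 'a cochain" where
  "lap k A m f = lap_down k A m f + lap_up k A m f"

definition cscale :: "real \<Rightarrow> ('b \<Rightarrow> real) \<Rightarrow> ('b \<Rightarrow> real)" where
  "cscale c f = (\<lambda>x. c * f x)"

definition eigenvalue_on :: "('b \<Rightarrow> real) set \<Rightarrow> (('b \<Rightarrow> real) \<Rightarrow> ('b \<Rightarrow> real)) \<Rightarrow> real \<Rightarrow> bool" where
  "eigenvalue_on W L c \<longleftrightarrow> (\<exists>v\<in>W. v \<noteq> 0 \<and> L v = cscale c v)"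

text \<open>Multiplicity: dimension of the eigenspace inside W (the operators considered are
  self-adjoint, so this equals the algebraic multiplicity).\<close>
definition eig_mult :: "('b \<Rightarrow> real) set \<Rightarrow> (('b \<Rightarrow> real) \<Rightarrow> ('b \<Rightarrow> real)) \<Rightarrow> real \<Rightarrow> nat" where
  "eig_mult W L c = vector_space.dim cscale {v\<in>W. L v = cscale c v}"

end

theory Submission
  imports Defs
begin

text \<open>
  A face of the join is the graph of a map from a set of parts to G, and the cross terms of
  L^- and L^+ cancel, so on faces with m vertices
  L f \<sigma> = (k + 1 - m) n f \<sigma> + \<Sum>(w \<in> \<sigma>) \<Sum>(g \<in> G) f (\<sigma> with the label of w replaced by g).
  Fix e \<in> G (base) and the basis \<chi>_e = 1, \<chi>_h = \<delta>_h - \<delta>_e (h \<noteq> e) of the functions on G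
  (basis_fun); summation over G kills \<chi>_h for h \<noteq> e and multiplies \<chi>_e by n. Hence the tensor
  product of these functions indexed by a face \<tau> (eigencochain) is an eigenvector with eigenvalue
  n (k + 1 - m + z), where z is the number of vertices of \<tau> labelled e (base_count), and counting
  faces by z gives (i).

  For (ii), since d d = 0 and d^* is the adjoint of d, every eigenspace of L_j for an eigenvalue
  \<mu> \<noteq> 0 is the direct sum of the \<mu>-eigenspaces of L_j^- on im d_{j-1} and of L_j^+ on im d_j^*,
  and d_j maps the latter isomorphically onto the \<mu>-eigenspace of L_{j+1}^- on im d_j. Starting
  from im d_{-1}, spanned by the constant vertex cochain with eigenvalue (k + 1) n, induction on j
  gives the multiplicities by Pascal's rule.
\<close>

lemma faces_iff:
  "S \<in> faces k A m \<longleftrightarrow> S \<subseteq> join_vertices k A \<and> card S = m \<and> inj_on fst S"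
  by (auto simp: faces_def inj_on_def)

lemma finite_join_vertices: "finite A \<Longrightarrow> finite (join_vertices k A)"
  by (simp add: join_vertices_def)

lemma card_join_vertices: "card (join_vertices k A) = (k + 1) * card A"
  by (simp add: join_vertices_def card_cartesian_product)

lemma finite_faces: "finite A \<Longrightarrow> finite (faces k A m)"
  by (rule finite_subset[of _ "Pow (join_vertices k A)"]) (auto simp: faces_def finite_join_vertices)

lemma finite_face: "finite A \<Longrightarrow> S \<in> faces k A m \<Longrightarrow> finite S"
  by (meson faces_iff finite_join_vertices finite_subset)

lemma card_face: "S \<in> faces k A m \<Longrightarrow> card S = m"
  by (simp add: faces_def)

lemma face_subset_join: "S \<in> faces k A m \<Longrightarrow> S \<subseteq> join_vertices k A"
  by (simp add: faces_def)

lemma face_fst_eqD: "S \<in> faces k A m \<Longrightarrow> v \<in> S \<Longrightarrow> w \<in> S \<Longrightarrow> fst v = fst w \<Longrightarrow> v = w"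
  by (simp add: faces_def)

lemma fst_face_subset: "S \<in> faces k A m \<Longrightarrow> fst ` S \<subseteq> {1..k+1}"
  by (auto simp: faces_def join_vertices_def)

lemma card_fst_face: "S \<in> faces k A m \<Longrightarrow> card (fst ` S) = m"
  by (simp add: faces_def card_image inj_on_def)

lemma face_Diff_vertex:
  "finite A \<Longrightarrow> S \<in> faces k A (Suc m) \<Longrightarrow> v \<in> S \<Longrightarrow> S - {v} \<in> faces k A m"
  using finite_face[of A S k "Suc m"] by (auto simp: faces_def)

lemma insert_face_iff:
  assumes "finite A" "S \<in> faces k A m" "v \<notin> S"
  shows "insert v S \<in> faces k A (Suc m) \<longleftrightarrow> v \<in> join_vertices k A \<and> fst v \<notin> fst ` S"
  using assms finite_face[OF assms(1,2)] by (auto simp: faces_def) (force simp: image_iff)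

lemma faces_0:
  assumes "finite A"
  shows "faces k A 0 = {{}}"
proof -
  have "S = {}" if "S \<in> faces k A 0" for S
    using that finite_face[OF assms that] by (simp add: faces_def)
  moreover have "{} \<in> faces k A 0" by (simp add: faces_def)
  ultimately show ?thesis by blast
qed

lemma singleton_face_iff: "{v} \<in> faces k A (Suc 0) \<longleftrightarrow> v \<in> join_vertices k A"
  by (simp add: faces_def)

lemma extension_vertices_eq:
  assumes "finite A" "S \<in> faces k A m"
  shows "{v \<in> join_vertices k A - S. insert v S \<in> faces k A (m + 1)} = ({1..k+1} - fst ` S) \<times> A"
proof -
  have "{v \<in> join_vertices k A - S. insert v S \<in> faces k A (m + 1)} =
      {v \<in> join_vertices k A. fst v \<notin> fst ` S}"
    using insert_face_iff[OF assms] by auto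
  also have "\<dots> = ({1..k+1} - fst ` S) \<times> A"
    by (force simp: join_vertices_def)
  finally show ?thesis .
qed

lemma card_extension_vertices:
  assumes "S \<in> faces k A m"
  shows "card (({1..k+1} - fst ` S) \<times> A) = (k + 1 - m) * card A"
  using fst_face_subset[OF assms] card_fst_face[OF assms]
  by (simp add: card_cartesian_product card_Diff_subset finite_subset)

lemma vsign_square: "vsign v T * vsign v T = 1"
  by (simp add: vsign_def flip: power_add)

lemma vsign_singleton: "vsign v {v} = 1"
proof -
  have "{w \<in> {v}. fst w < fst v} = {}" by auto
  then show ?thesis unfolding vsign_def by (simp only: card.empty power_0)
qed

lemma vsign_insert_self: "vsign v (insert v S) = vsign v S"
proof -
  have "{x \<in> insert v S. fst x < fst v} = {x \<in> S. fst x < fst v}" by auto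
  then show ?thesis by (simp add: vsign_def)
qed

lemma vsign_Diff:
  assumes "finite T" "w \<in> T" "fst w \<noteq> fst v"
  shows "vsign v (T - {w}) = (if fst w < fst v then - vsign v T else vsign v T)"
proof (cases "fst w < fst v")
  case True
  have "card {x \<in> T. fst x < fst v} = Suc (card {x \<in> T - {w}. fst x < fst v})"
    using card_Suc_Diff1[of "{x \<in> T. fst x < fst v}" w] True assms
    by (simp add: set_diff_eq conj_commute conj_left_commute)
  then show ?thesis using True by (simp add: vsign_def)
next
  case False
  then have "{x \<in> T - {w}. fst x < fst v} = {x \<in> T. fst x < fst v}" by auto
  then show ?thesis using False by (simp add: vsign_def)
qed

lemma vsign_insert:
  assumes "finite T" "w \<notin> T" "fst w \<noteq> fst v"
  shows "vsign v (insert w T) = (if fst w < fst v then - vsign v T else vsign v T)"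
  using vsign_Diff[of "insert w T" w v] assms by (auto split: if_splits)

lemma vsign_replace:
  assumes "w \<in> S" "fst u = fst w"
  shows "vsign u (insert u (S - {w})) = vsign w S"
proof -
  have "{x \<in> insert u (S - {w}). fst x < fst u} = {x \<in> S. fst x < fst w}"
    using assms by auto
  then show ?thesis by (simp add: vsign_def)
qed

text \<open>Removing w and adding v in the two possible orders gives opposite signs; this is why
  the cross terms of the two Laplacians cancel.\<close>
lemma vsign_exchange:
  assumes "finite S" "w \<in> S" "v \<notin> S" "fst v \<noteq> fst w"
  shows "vsign w S * vsign v (insert v (S - {w})) = - (vsign v (insert v S) * vsign w (insert v S))"
proof -
  have "vsign v (insert v (S - {w})) = (if fst w < fst v then - vsign v S else vsign v S)"
    using vsign_Diff[OF assms(1,2), of v] assms(4) by (simp add: vsign_insert_self)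
  moreover have "vsign w (insert v S) = (if fst v < fst w then - vsign w S else vsign w S)"
    using vsign_insert[OF assms(1,3), of w] assms(4) by simp
  ultimately show ?thesis
    using assms(4) by (auto simp: vsign_insert_self)
qed

lemma sum_sum_antisym_eq_0:
  fixes a :: "'x \<Rightarrow> 'x \<Rightarrow> real"
  assumes "finite T" "\<And>v w. v \<in> T \<Longrightarrow> w \<in> T \<Longrightarrow> v \<noteq> w \<Longrightarrow> a w v = - a v w"
  shows "(\<Sum>v\<in>T. \<Sum>w\<in>T - {v}. a v w) = 0"
proof -
  let ?P = "Sigma T (\<lambda>v. T - {v})"
  have "(\<Sum>(v, w)\<in>?P. a v w) = (\<Sum>(v, w)\<in>?P. a w v)"
    by (rule sum.reindex_bij_witness[where i = prod.swap and j = prod.swap]) auto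
  also have "\<dots> = (\<Sum>(v, w)\<in>?P. - a v w)"
    by (rule sum.cong) (auto intro: assms(2))
  also have "\<dots> = - (\<Sum>(v, w)\<in>?P. a v w)"
    by (simp add: split_def sum_negf)
  finally have "(\<Sum>(v, w)\<in>?P. a v w) = 0" by simp
  then show ?thesis
    using assms(1) by (simp add: sum.Sigma)
qed

lemma cobound_cobound:
  assumes "finite A"
  shows "cobound k A (Suc m) (cobound k A m f) = 0"
proof
  fix T
  show "cobound k A (Suc m) (cobound k A m f) T = 0 T"
  proof (cases "T \<in> faces k A (Suc m + 1)")
    case False then show ?thesis by (simp add: cobound_def)
  next
    case True
    have fT: "finite T" using finite_face[OF assms True] .
    have "cobound k A (Suc m) (cobound k A m f) T =
      (\<Sum>v\<in>T. \<Sum>w\<in>T - {v}. vsign v T * (vsign w (T - {v}) * f (T - {v} - {w})))"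
      using True face_Diff_vertex[OF assms, of T k "Suc m"]
      by (simp add: cobound_def sum_distrib_left)
    also have "\<dots> = 0"
    proof (rule sum_sum_antisym_eq_0[OF fT])
      fix v w assume vw: "v \<in> T" "w \<in> T" "v \<noteq> w"
      then have "fst v \<noteq> fst w" using face_fst_eqD[OF True] by blast
      moreover have "T - {w} - {v} = T - {v} - {w}" by auto
      ultimately show "vsign w T * (vsign v (T - {w}) * f (T - {w} - {v})) =
          - (vsign v T * (vsign w (T - {v}) * f (T - {v} - {w})))"
        using vw by (auto simp: vsign_Diff[OF fT])
    qed
    finally show ?thesis by simp
  qed
qed

lemma cobound_adjoint:
  assumes "finite A"
  shows "(\<Sum>T\<in>faces k A (Suc m). cobound k A m f T * g T) =
         (\<Sum>S\<in>faces k A m. f S * cobound_adj k A m g S)"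
proof -
  let ?N = "\<lambda>S. {v \<in> join_vertices k A - S. insert v S \<in> faces k A (m + 1)}"
  have "(\<Sum>T\<in>faces k A (Suc m). cobound k A m f T * g T) =
        (\<Sum>(T, v)\<in>Sigma (faces k A (Suc m)) (\<lambda>T. T). vsign v T * f (T - {v}) * g T)"
    using finite_faces[OF assms] finite_face[OF assms]
    by (simp add: sum.Sigma cobound_def sum_distrib_right)
  also have "\<dots> = (\<Sum>(S, v)\<in>Sigma (faces k A m) ?N. f S * (vsign v (insert v S) * g (insert v S)))"
  proof (rule sum.reindex_bij_witness[where i = "\<lambda>(S, v). (insert v S, v)" and j = "\<lambda>(T, v). (T - {v}, v)"])
    fix p assume "p \<in> Sigma (faces k A (Suc m)) (\<lambda>T. T)"
    then obtain T v where p: "p = (T, v)" "T \<in> faces k A (Suc m)" "v \<in> T" by blast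
    then show "(\<lambda>(S, v). (insert v S, v)) ((\<lambda>(T, v). (T - {v}, v)) p) = p"
      by (simp add: insert_absorb)
    show "(\<lambda>(T, v). (T - {v}, v)) p \<in> Sigma (faces k A m) ?N"
      using p face_Diff_vertex[OF assms p(2,3)] face_subset_join[OF p(2)] by (auto simp: insert_absorb)
    show "(\<lambda>(S, v). f S * (vsign v (insert v S) * g (insert v S))) ((\<lambda>(T, v). (T - {v}, v)) p) =
        (\<lambda>(T, v). vsign v T * f (T - {v}) * g T) p"
      using p by (simp add: insert_absorb)
  next
    fix p assume "p \<in> Sigma (faces k A m) ?N"
    then obtain S v where p: "p = (S, v)" "v \<notin> S" "insert v S \<in> faces k A (Suc m)" by auto
    then show "(\<lambda>(T, v). (T - {v}, v)) ((\<lambda>(S, v). (insert v S, v)) p) = p"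
      "(\<lambda>(S, v). (insert v S, v)) p \<in> Sigma (faces k A (Suc m)) (\<lambda>T. T)"
      by auto
  qed
  also have "\<dots> = (\<Sum>S\<in>faces k A m. f S * cobound_adj k A m g S)"
    using finite_faces[OF assms] finite_join_vertices[OF assms]
    by (subst sum.Sigma[symmetric]) (auto simp: cobound_adj_def sum_distrib_left intro!: sum.cong)
  finally show ?thesis .
qed

definition relabel :: "'a vtx set \<Rightarrow> 'a vtx \<Rightarrow> 'a \<Rightarrow> 'a vtx set" where
  "relabel S w g = insert (fst w, g) (S - {w})"

lemma relabel_face:
  assumes "finite A" "S \<in> faces k A m" "w \<in> S" "g \<in> A"
  shows "relabel S w g \<in> faces k A m" "fst ` relabel S w g = fst ` S"
proof -
  obtain m' where m: "m = Suc m'"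
    using card_face[OF assms(2)] assms(3) finite_face[OF assms(1,2)] by (cases m) auto
  have S': "S - {w} \<in> faces k A m'" using face_Diff_vertex[OF assms(1)] assms(2,3) m by simp
  have "(fst w, g) \<notin> S - {w}" "fst w \<notin> fst ` (S - {w})"
    using face_fst_eqD[OF assms(2) _ assms(3)] by auto
  moreover have "(fst w, g) \<in> join_vertices k A"
    using face_subset_join[OF assms(2)] assms(3,4) by (auto simp: join_vertices_def)
  ultimately show "relabel S w g \<in> faces k A m"
    using insert_face_iff[OF assms(1) S'] m by (simp add: relabel_def)
  show "fst ` relabel S w g = fst ` S" using assms(3) by (auto simp: relabel_def)
qed

lemma lap_up_apply:
  assumes "finite A" and \<sigma>: "\<sigma> \<in> faces k A (Suc m)"
  defines "N \<equiv> ({1..k+1} - fst ` \<sigma>) \<times> A"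
  shows "lap_up k A (Suc m) f \<sigma> = real ((k - m) * card A) * f \<sigma> +
     (\<Sum>v\<in>N. \<Sum>w\<in>\<sigma>. vsign v (insert v \<sigma>) * vsign w (insert v \<sigma>) * f (insert v \<sigma> - {w}))"
proof -
  have "lap_up k A (Suc m) f \<sigma> = (\<Sum>v\<in>N. vsign v (insert v \<sigma>) * cobound k A (Suc m) f (insert v \<sigma>))"
    using extension_vertices_eq[OF assms(1,2)] \<sigma> by (simp add: lap_up_def cobound_adj_def N_def)
  also have "\<dots> = (\<Sum>v\<in>N. f \<sigma> +
      (\<Sum>w\<in>\<sigma>. vsign v (insert v \<sigma>) * vsign w (insert v \<sigma>) * f (insert v \<sigma> - {w})))"
  proof (rule sum.cong[OF refl])
    fix v assume v: "v \<in> N"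
    then have "fst v \<notin> fst ` \<sigma>" by (simp add: N_def mem_Times_iff)
    then have "v \<notin> \<sigma>" by blast
    moreover have "v \<in> join_vertices k A" using v by (auto simp: N_def join_vertices_def)
    then have "insert v \<sigma> \<in> faces k A (Suc m + 1)"
      using insert_face_iff[OF assms(1,2) \<open>v \<notin> \<sigma>\<close>] \<open>fst v \<notin> fst ` \<sigma>\<close> by simp
    ultimately show "vsign v (insert v \<sigma>) * cobound k A (Suc m) f (insert v \<sigma>) = f \<sigma> +
      (\<Sum>w\<in>\<sigma>. vsign v (insert v \<sigma>) * vsign w (insert v \<sigma>) * f (insert v \<sigma> - {w}))"
      using finite_face[OF assms(1,2)]
      by (simp add: cobound_def distrib_left sum_distrib_left vsign_square flip: mult.assoc)
  qed
  also have "\<dots> = real ((k - m) * card A) * f \<sigma> +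
     (\<Sum>v\<in>N. \<Sum>w\<in>\<sigma>. vsign v (insert v \<sigma>) * vsign w (insert v \<sigma>) * f (insert v \<sigma> - {w}))"
    using card_extension_vertices[OF \<sigma>] by (simp add: sum.distrib N_def)
  finally show ?thesis .
qed

lemma cobound_adj_Diff_vertex:
  assumes "finite A" and \<sigma>: "\<sigma> \<in> faces k A (Suc m)" and w: "w \<in> \<sigma>"
  defines "N \<equiv> ({1..k+1} - fst ` \<sigma>) \<times> A"
  shows "vsign w \<sigma> * cobound_adj k A m f (\<sigma> - {w}) = (\<Sum>g\<in>A. f (relabel \<sigma> w g)) +
     (\<Sum>v\<in>N. vsign w \<sigma> * vsign v (insert v (\<sigma> - {w})) * f (insert v (\<sigma> - {w})))"
proof -
  let ?h = "\<lambda>u. vsign u (insert u (\<sigma> - {w})) * f (insert u (\<sigma> - {w}))"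
  have \<sigma>w: "\<sigma> - {w} \<in> faces k A m" using face_Diff_vertex[OF assms(1) \<sigma> w] .
  have "fst ` (\<sigma> - {w}) = fst ` \<sigma> - {fst w}"
    using face_fst_eqD[OF \<sigma> _ w] w by auto
  moreover have "fst w \<in> {1..k+1}" using fst_face_subset[OF \<sigma>] w by auto
  ultimately have split: "({1..k+1} - fst ` (\<sigma> - {w})) \<times> A = Pair (fst w) ` A \<union> N"
    by (auto simp: N_def)
  have "cobound_adj k A m f (\<sigma> - {w}) =
      (\<Sum>u\<in>{v \<in> join_vertices k A - (\<sigma> - {w}). insert v (\<sigma> - {w}) \<in> faces k A (m + 1)}. ?h u)"
    using \<sigma>w by (simp add: cobound_adj_def)
  also have "\<dots> = (\<Sum>u\<in>Pair (fst w) ` A \<union> N. ?h u)"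
    by (simp only: extension_vertices_eq[OF assms(1) \<sigma>w] split)
  also have "\<dots> = (\<Sum>u\<in>Pair (fst w) ` A. ?h u) + (\<Sum>u\<in>N. ?h u)"
    using assms(1) w by (intro sum.union_disjoint) (auto simp: N_def)
  also have "(\<Sum>u\<in>Pair (fst w) ` A. ?h u) = (\<Sum>g\<in>A. vsign w \<sigma> * f (relabel \<sigma> w g))"
    by (subst sum.reindex) (auto simp: inj_on_def vsign_replace[OF w] relabel_def)
  finally show ?thesis
    by (simp add: distrib_left sum_distrib_left vsign_square flip: mult.assoc)
qed

lemma lap_down_apply:
  assumes "finite A" and \<sigma>: "\<sigma> \<in> faces k A (Suc m)"
  defines "N \<equiv> ({1..k+1} - fst ` \<sigma>) \<times> A"
  shows "lap_down k A (Suc m) f \<sigma> = (\<Sum>w\<in>\<sigma>. \<Sum>g\<in>A. f (relabel \<sigma> w g)) +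
     (\<Sum>w\<in>\<sigma>. \<Sum>v\<in>N. vsign w \<sigma> * vsign v (insert v (\<sigma> - {w})) * f (insert v (\<sigma> - {w})))"
proof -
  have "lap_down k A (Suc m) f \<sigma> = (\<Sum>w\<in>\<sigma>. vsign w \<sigma> * cobound_adj k A m f (\<sigma> - {w}))"
    using \<sigma> by (simp add: lap_down_def cobound_def)
  then show ?thesis
    using cobound_adj_Diff_vertex[OF assms(1,2)] by (simp add: sum.distrib N_def)
qed

lemma lap_apply:
  assumes "finite A" and \<sigma>: "\<sigma> \<in> faces k A (Suc m)"
  shows "lap k A (Suc m) f \<sigma> = real ((k - m) * card A) * f \<sigma> + (\<Sum>w\<in>\<sigma>. \<Sum>g\<in>A. f (relabel \<sigma> w g))"
proof -
  define N where "N = ({1..k+1} - fst ` \<sigma>) \<times> A"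
  have "vsign w \<sigma> * vsign v (insert v (\<sigma> - {w})) * f (insert v (\<sigma> - {w})) =
      - (vsign v (insert v \<sigma>) * vsign w (insert v \<sigma>) * f (insert v \<sigma> - {w}))"
    if "w \<in> \<sigma>" "v \<in> N" for w v
  proof -
    have "fst v \<notin> fst ` \<sigma>" using that(2) by (simp add: N_def mem_Times_iff)
    then have "v \<notin> \<sigma>" "fst v \<noteq> fst w" using that(1) by blast+
    moreover from this have "insert v \<sigma> - {w} = insert v (\<sigma> - {w})" using that by auto
    ultimately show ?thesis
      using vsign_exchange[OF finite_face[OF assms] that(1)] by simp
  qed
  then have "(\<Sum>w\<in>\<sigma>. \<Sum>v\<in>N. vsign w \<sigma> * vsign v (insert v (\<sigma> - {w})) * f (insert v (\<sigma> - {w}))) =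
      - (\<Sum>v\<in>N. \<Sum>w\<in>\<sigma>. vsign v (insert v \<sigma>) * vsign w (insert v \<sigma>) * f (insert v \<sigma> - {w}))"
    by (subst sum.swap) (simp add: sum_negf)
  then show ?thesis
    using lap_up_apply[OF assms] lap_down_apply[OF assms] by (simp add: lap_def N_def)
qed

section \<open>Linear algebra in spaces of real functions\<close>

interpretation cs: vector_space "cscale :: real \<Rightarrow> ('x \<Rightarrow> real) \<Rightarrow> ('x \<Rightarrow> real)"
  by unfold_locales (auto simp: cscale_def fun_eq_iff algebra_simps)

interpretation cs: vector_space_pair "cscale :: real \<Rightarrow> ('x \<Rightarrow> real) \<Rightarrow> ('x \<Rightarrow> real)"
  "cscale :: real \<Rightarrow> ('y \<Rightarrow> real) \<Rightarrow> ('y \<Rightarrow> real)"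
  by unfold_locales

abbreviation fun_linear :: "(('x \<Rightarrow> real) \<Rightarrow> ('y \<Rightarrow> real)) \<Rightarrow> bool" where
  "fun_linear \<equiv> Vector_Spaces.linear cscale cscale"

lemma fun_linearI:
  assumes "\<And>f g. L (f + g) = L f + L g" and "\<And>c f. L (cscale c f) = cscale c (L f)"
  shows "fun_linear L"
  by (simp add: Vector_Spaces.linear_iff assms cs.vector_space_axioms)

lemma fun_linear_compose: "fun_linear L \<Longrightarrow> fun_linear M \<Longrightarrow> fun_linear (\<lambda>f. L (M f))"
  using Vector_Spaces.linear_compose[of cscale cscale M cscale L] by (simp add: comp_def)

lemma cscale_apply: "cscale c f x = c * f x"
  by (simp add: cscale_def)

lemma sum_fun_apply: "(\<Sum>i\<in>I. f i) x = (\<Sum>i\<in>I. f i x)"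
  by (induction I rule: infinite_finite_induct) auto

lemma subspace_eigenspace:
  assumes "fun_linear L" "cs.subspace S"
  shows "cs.subspace {v \<in> S. L v = cscale \<mu> v}"
  unfolding cs.subspace_def
proof (intro conjI ballI allI)
  show "0 \<in> {v \<in> S. L v = cscale \<mu> v}"
    using cs.subspace_0[OF assms(2)] cs.linear_0[OF assms(1)] by simp
  fix x y assume "x \<in> {v \<in> S. L v = cscale \<mu> v}" "y \<in> {v \<in> S. L v = cscale \<mu> v}"
  then show "x + y \<in> {v \<in> S. L v = cscale \<mu> v}"
    using cs.subspace_add[OF assms(2)] cs.linear_add[OF assms(1)] by (simp add: cs.scale_right_distrib)
next
  fix c x assume "x \<in> {v \<in> S. L v = cscale \<mu> v}"
  then show "cscale c x \<in> {v \<in> S. L v = cscale \<mu> v}"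
    using cs.subspace_scale[OF assms(2)] cs.linear_scale[OF assms(1)] by (simp add: cs.scale_left_commute)
qed

lemma obtain_finite_basis:
  fixes U :: "('x \<Rightarrow> real) set"
  assumes "U \<subseteq> cs.span S" "finite S"
  obtains B where "B \<subseteq> U" "cs.independent B" "U \<subseteq> cs.span B" "card B = cs.dim U" "finite B"
proof -
  obtain B where B: "B \<subseteq> U" "cs.independent B" "U \<subseteq> cs.span B" "card B = cs.dim U"
    using cs.basis_exists by blast
  have "finite B" using cs.independent_span_bound[OF assms(2) B(2)] B(1) assms(1) by auto
  then show ?thesis using B that by blast
qed

lemma dim_neq_0:
  fixes U :: "('x \<Rightarrow> real) set"
  assumes "U \<subseteq> cs.span S" "finite S" "v \<in> U" "v \<noteq> 0"
  shows "cs.dim U \<noteq> 0"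
proof
  assume "cs.dim U = 0"
  moreover obtain B where "U \<subseteq> cs.span B" "card B = cs.dim U" "finite B"
    using obtain_finite_basis[OF assms(1,2)] by blast
  ultimately have "U \<subseteq> cs.span {}" by simp
  then show False using assms(3,4) by auto
qed

lemma independent_if_card_le_dim:
  fixes B :: "('x \<Rightarrow> real) set"
  assumes "B \<subseteq> V" "V \<subseteq> cs.span B" "finite B" "card B \<le> cs.dim V"
  shows "cs.independent B" "card B = cs.dim V"
proof -
  obtain B' where B': "B' \<subseteq> B" "cs.independent B'" "B \<subseteq> cs.span B'"
    using cs.maximal_independent_subset[of B] by blast
  have "V \<subseteq> cs.span B'"
    using assms(2) B'(3) cs.span_mono cs.span_span by blast
  then have "card B' = cs.dim V" using cs.basis_card_eq_dim B'(1,2) assms(1) by blast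
  then have "B' = B"
    using card_subset_eq[OF assms(3) B'(1)] card_mono[OF assms(3) B'(1)] assms(4) by simp
  then show "cs.independent B" "card B = cs.dim V"
    using B'(2) \<open>card B' = cs.dim V\<close> by simp_all
qed

lemma eigenspace_span_eigenvectors:
  fixes B :: "('x \<Rightarrow> real) set"
  assumes "finite B" "cs.independent B" "fun_linear L"
    and eig: "\<And>b. b \<in> B \<Longrightarrow> L b = cscale (\<theta> b) b"
  shows "{v \<in> cs.span B. L v = cscale \<mu> v} = cs.span {b\<in>B. \<theta> b = \<mu>}"
proof
  show "{v \<in> cs.span B. L v = cscale \<mu> v} \<subseteq> cs.span {b\<in>B. \<theta> b = \<mu>}"
  proof clarify
    fix v assume v: "v \<in> cs.span B" and Lv: "L v = cscale \<mu> v"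
    obtain u where u: "v = (\<Sum>b\<in>B. cscale (u b) b)"
      using v cs.span_finite[OF assms(1)] by auto
    have "L v - cscale \<mu> v = (\<Sum>b\<in>B. cscale (u b * (\<theta> b - \<mu>)) b)"
      using u assms(3) eig
      by (simp add: cs.linear_sum cs.linear_scale cs.scale_sum_right cs.scale_scale
          cs.scale_left_diff_distrib right_diff_distrib sum_subtractf mult.commute)
    then have "u b * (\<theta> b - \<mu>) = 0" if "b \<in> B" for b
      using cs.independentD[OF assms(2,1) subset_refl, of "\<lambda>b. u b * (\<theta> b - \<mu>)"] that Lv by simp
    then have "v = (\<Sum>b\<in>{b\<in>B. \<theta> b = \<mu>}. cscale (u b) b)"
      unfolding u using assms(1) by (intro sum.mono_neutral_right) auto
    moreover have "(\<Sum>b\<in>{b\<in>B. \<theta> b = \<mu>}. cscale (u b) b) \<in> cs.span {b\<in>B. \<theta> b = \<mu>}"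
      by (intro cs.span_sum cs.span_scale cs.span_base) auto
    ultimately show "v \<in> cs.span {b\<in>B. \<theta> b = \<mu>}" by simp
  qed
  show "cs.span {b\<in>B. \<theta> b = \<mu>} \<subseteq> {v \<in> cs.span B. L v = cscale \<mu> v}"
  proof
    fix v assume v: "v \<in> cs.span {b\<in>B. \<theta> b = \<mu>}"
    obtain u where u: "v = (\<Sum>b\<in>{b\<in>B. \<theta> b = \<mu>}. cscale (u b) b)"
      using v cs.span_finite[of "{b\<in>B. \<theta> b = \<mu>}"] assms(1) by auto
    have "L v = cscale \<mu> v"
      using u assms(3) eig
      by (simp add: cs.linear_sum cs.linear_scale cs.scale_scale cs.scale_sum_right mult.commute)
    moreover have "v \<in> cs.span B" using v cs.span_mono[of "{b\<in>B. \<theta> b = \<mu>}" B] by auto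
    ultimately show "v \<in> {v \<in> cs.span B. L v = cscale \<mu> v}" by simp
  qed
qed

lemma dim_eigenspace_eigenbasis:
  fixes \<phi> :: "'i \<Rightarrow> ('x \<Rightarrow> real)"
  assumes "finite X" "inj_on \<phi> X" "cs.independent (\<phi> ` X)" "fun_linear L"
    and eig: "\<And>x. x \<in> X \<Longrightarrow> L (\<phi> x) = cscale (\<theta> x) (\<phi> x)"
  shows "cs.dim {v \<in> cs.span (\<phi> ` X). L v = cscale \<mu> v} = card {x\<in>X. \<theta> x = \<mu>}"
proof -
  define \<theta>' where "\<theta>' b = \<theta> (the_inv_into X \<phi> b)" for b
  have \<theta>': "\<theta>' (\<phi> x) = \<theta> x" if "x \<in> X" for x
    using the_inv_into_f_f[OF assms(2) that] by (simp add: \<theta>'_def)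
  have "{v \<in> cs.span (\<phi> ` X). L v = cscale \<mu> v} = cs.span {b\<in>\<phi> ` X. \<theta>' b = \<mu>}"
    using assms \<theta>' by (intro eigenspace_span_eigenvectors) auto
  also have "{b\<in>\<phi> ` X. \<theta>' b = \<mu>} = \<phi> ` {x\<in>X. \<theta> x = \<mu>}" using \<theta>' by auto
  finally have span: "{v \<in> cs.span (\<phi> ` X). L v = cscale \<mu> v} = cs.span (\<phi> ` {x\<in>X. \<theta> x = \<mu>})" .
  have "cs.independent (\<phi> ` {x\<in>X. \<theta> x = \<mu>})"
    by (rule cs.independent_mono[OF assms(3)]) auto
  then have "cs.dim {v \<in> cs.span (\<phi> ` X). L v = cscale \<mu> v} = card (\<phi> ` {x\<in>X. \<theta> x = \<mu>})"
    unfolding span by (rule cs.dim_span_eq_card_independent)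
  then show ?thesis
    using card_image[OF inj_on_subset[OF assms(2)]] by simp
qed

lemma eigenvalue_of_eigenbasis:
  fixes \<phi> :: "'i \<Rightarrow> ('x \<Rightarrow> real)"
  assumes "finite X" "inj_on \<phi> X" "cs.independent (\<phi> ` X)" "fun_linear L"
    and "\<And>x. x \<in> X \<Longrightarrow> L (\<phi> x) = cscale (\<theta> x) (\<phi> x)"
    and "v \<in> cs.span (\<phi> ` X)" "v \<noteq> 0" "L v = cscale \<mu> v"
  shows "\<exists>x\<in>X. \<theta> x = \<mu>"
proof -
  have "cs.dim {v \<in> cs.span (\<phi> ` X). L v = cscale \<mu> v} \<noteq> 0"
    using assms(1,6-8) by (intro dim_neq_0[of _ "\<phi> ` X" v]) auto
  then have "card {x\<in>X. \<theta> x = \<mu>} \<noteq> 0"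
    using dim_eigenspace_eigenbasis[OF assms(1-5)] by simp
  then show ?thesis by (metis (mono_tags, lifting) Collect_empty_eq card.empty)
qed

lemma dim_direct_sum:
  fixes U :: "('x \<Rightarrow> real) set"
  assumes "cs.subspace U" "cs.subspace U'" "U \<subseteq> W" "U' \<subseteq> W"
    and sum: "\<And>w. w \<in> W \<Longrightarrow> \<exists>u\<in>U. \<exists>u'\<in>U'. w = u + u'"
    and inter: "\<And>x. x \<in> U \<Longrightarrow> x \<in> U' \<Longrightarrow> x = 0"
    and "W \<subseteq> cs.span S" "finite S"
  shows "cs.dim W = cs.dim U + cs.dim U'"
proof -
  obtain B where B: "B \<subseteq> U" "cs.independent B" "U \<subseteq> cs.span B" "card B = cs.dim U" "finite B"
    using obtain_finite_basis[of U S] assms(3,7,8) by blast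
  obtain B' where B': "B' \<subseteq> U'" "cs.independent B'" "U' \<subseteq> cs.span B'" "card B' = cs.dim U'" "finite B'"
    using obtain_finite_basis[of U' S] assms(4,7,8) by blast
  have disj: "B \<inter> B' = {}"
    using inter B(1,2) B'(1) cs.dependent_zero by blast
  have "cs.independent (B \<union> B')"
  proof (rule cs.independent_if_scalars_zero)
    show "finite (B \<union> B')" using B(5) B'(5) by simp
    fix c x assume zero: "(\<Sum>x\<in>B \<union> B'. cscale (c x) x) = 0" and x: "x \<in> B \<union> B'"
    define p q where "p = (\<Sum>x\<in>B. cscale (c x) x)" and "q = (\<Sum>x\<in>B'. cscale (c x) x)"
    have "p \<in> U" "q \<in> U'"
      unfolding p_def q_def using B(1) B'(1) assms(1,2) by (auto intro!: cs.subspace_sum cs.subspace_scale)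
    moreover have "p = - q"
      using zero disj B(5) B'(5) by (simp add: p_def q_def sum.union_disjoint eq_neg_iff_add_eq_0)
    ultimately have "p = 0" "q = 0"
      using inter[of p] cs.subspace_neg[OF assms(2), of q] by auto
    then show "c x = 0"
      using x cs.independentD[OF B(2,5) subset_refl, of c x] cs.independentD[OF B'(2,5) subset_refl, of c x]
      by (auto simp: p_def q_def)
  qed
  moreover have "W \<subseteq> cs.span (B \<union> B')"
  proof
    fix w assume "w \<in> W"
    then obtain u u' where "u \<in> cs.span B" "u' \<in> cs.span B'" "w = u + u'"
      using sum B(3) B'(3) by blast
    then show "w \<in> cs.span (B \<union> B')"
      using cs.span_mono[of B "B \<union> B'"] cs.span_mono[of B' "B \<union> B'"] by (auto intro: cs.span_add)
  qed
  ultimately have "card (B \<union> B') = cs.dim W"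
    using cs.basis_card_eq_dim B(1) B'(1) assms(3,4) by (metis Un_least order_trans)
  then show ?thesis using card_Un_disjoint[OF B(5) B'(5) disj] B(4) B'(4) by simp
qed

lemma dim_image_inj_on:
  fixes U :: "('x \<Rightarrow> real) set" and D :: "('x \<Rightarrow> real) \<Rightarrow> ('y \<Rightarrow> real)"
  assumes "fun_linear D" "cs.subspace U" "inj_on D U" "U \<subseteq> cs.span S" "finite S"
  shows "cs.dim (D ` U) = cs.dim U"
proof -
  obtain B where B: "B \<subseteq> U" "cs.independent B" "U \<subseteq> cs.span B" "card B = cs.dim U" "finite B"
    using obtain_finite_basis[OF assms(4,5)] by blast
  have U: "cs.span B = U" using cs.span_subspace[OF B(1,3) assms(2)] .
  have "cs.independent (D ` B)"
    using cs.linear_independent_injective_image[OF assms(1) B(2)] assms(3) U by simp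
  moreover have "D ` U = cs.span (D ` B)" using cs.linear_span_image[OF assms(1)] U by simp
  ultimately have "cs.dim (D ` U) = card (D ` B)" by (simp add: cs.dim_eq_card_independent)
  then show ?thesis using card_image[OF inj_on_subset[OF assms(3) B(1)]] B(4) by simp
qed

lemma card_PiE_fiber_eq:
  assumes "finite I" "finite B" "b \<in> B" "Z \<subseteq> I"
  shows "card {p \<in> PiE I (\<lambda>_. B). {i\<in>I. p i = b} = Z} = (card B - 1) ^ (card I - card Z)"
proof -
  let ?F = "{p \<in> PiE I (\<lambda>_. B). {i\<in>I. p i = b} = Z}"
  have "bij_betw (\<lambda>p. restrict p (I - Z)) ?F (PiE (I - Z) (\<lambda>_. B - {b}))"
  proof (rule bij_betw_byWitness[where f' = "\<lambda>q i. if i \<in> Z then b else q i"])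
    show "\<forall>p\<in>?F. (\<lambda>i. if i \<in> Z then b else restrict p (I - Z) i) = p"
      by (auto simp: fun_eq_iff PiE_def extensional_def)
    show "\<forall>q\<in>PiE (I - Z) (\<lambda>_. B - {b}). restrict (\<lambda>i. if i \<in> Z then b else q i) (I - Z) = q"
      by (auto simp: fun_eq_iff PiE_def extensional_def)
    show "(\<lambda>p. restrict p (I - Z)) ` ?F \<subseteq> PiE (I - Z) (\<lambda>_. B - {b})"
      by (auto simp: PiE_def Pi_def)
    show "(\<lambda>q i. if i \<in> Z then b else q i) ` PiE (I - Z) (\<lambda>_. B - {b}) \<subseteq> ?F"
      using assms(3,4) by (auto simp: PiE_def Pi_def extensional_def split: if_splits)
  qed
  then have "card ?F = card (PiE (I - Z) (\<lambda>_. B - {b}))"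
    by (rule bij_betw_same_card)
  then show ?thesis
    using assms by (simp add: card_PiE card_Diff_subset finite_subset)
qed

lemma card_PiE_count_eq:
  assumes "finite I" "finite B" "b \<in> B"
  shows "card {p \<in> PiE I (\<lambda>_. B). card {i\<in>I. p i = b} = s} = (card I choose s) * (card B - 1) ^ (card I - s)"
proof -
  let ?Zs = "{Z. Z \<subseteq> I \<and> card Z = s}"
  let ?F = "\<lambda>Z. {p \<in> PiE I (\<lambda>_. B). {i\<in>I. p i = b} = Z}"
  have "{p \<in> PiE I (\<lambda>_. B). card {i\<in>I. p i = b} = s} = (\<Union>Z\<in>?Zs. ?F Z)" by auto
  also have "card \<dots> = (\<Sum>Z\<in>?Zs. card (?F Z))"
  proof (rule card_UN_disjoint)
    show "finite ?Zs" using finite_Collect_subsets[OF assms(1)] by (rule finite_subset[rotated]) auto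
    show "\<forall>Z\<in>?Zs. finite (?F Z)"
      using finite_PiE[OF assms(1), of "\<lambda>_. B"] assms(2) by auto
    show "\<forall>Z\<in>?Zs. \<forall>Z'\<in>?Zs. Z \<noteq> Z' \<longrightarrow> ?F Z \<inter> ?F Z' = {}" by blast
  qed
  also have "\<dots> = (\<Sum>Z\<in>?Zs. (card B - 1) ^ (card I - s))"
    using card_PiE_fiber_eq[OF assms] by simp
  also have "\<dots> = (card I choose s) * (card B - 1) ^ (card I - s)"
    using n_subsets[OF assms(1), of s] by simp
  finally show ?thesis .
qed

lemma choose_mult_choose_eq:
  assumes "j \<le> k" "s \<le> j + 1"
  shows "(k + 1 choose (j + 1)) * (j + 1 choose s) = (k + 1 choose (k - j + s)) * (k - j + s choose (k - j))"
proof -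
  have "(k + 1 choose (k - j + s)) * (k - j + s choose (k - j)) =
      (k + 1 choose (k - j)) * (k + 1 - (k - j) choose (k - j + s - (k - j)))"
    using assms by (intro choose_mult) auto
  also have "(k + 1 choose (k - j)) = (k + 1 choose (j + 1))"
    using binomial_symmetric[of "j + 1" "k + 1"] assms by simp
  finally show ?thesis using assms by simp
qed

locale join_complex =
  fixes k :: nat and A :: "'a set"
  assumes finite_A: "finite A" and A_nonempty: "A \<noteq> {}"
begin

abbreviation n :: nat where "n \<equiv> card A"

lemma n_pos: "n > 0"
  using finite_A A_nonempty by (simp add: card_gt_0_iff)

definition unit_cochain :: "'a vtx set \<Rightarrow> 'a cochain" where
  "unit_cochain S = (\<lambda>T. if T = S then 1 else 0)"

lemma subspace_cochains: "cs.subspace (cochains k A m)"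
  unfolding cs.subspace_def cochains_def by (auto simp: cscale_def)

lemma unit_cochain_in_cochains: "S \<in> faces k A m \<Longrightarrow> unit_cochain S \<in> cochains k A m"
  by (auto simp: cochains_def unit_cochain_def)

lemma cochain_eq_sum_unit_cochains:
  assumes "f \<in> cochains k A m"
  shows "f = (\<Sum>S\<in>faces k A m. cscale (f S) (unit_cochain S))"
proof
  fix T
  have "(\<Sum>S\<in>faces k A m. cscale (f S) (unit_cochain S)) T = (\<Sum>S\<in>faces k A m. if S = T then f S else 0)"
    by (simp add: sum_fun_apply cscale_apply unit_cochain_def if_distrib eq_commute cong: if_cong)
  also have "\<dots> = f T"
    using assms finite_faces[OF finite_A] by (simp add: sum.delta cochains_def)
  finally show "f T = (\<Sum>S\<in>faces k A m. cscale (f S) (unit_cochain S)) T" by simp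
qed

lemma cochains_eq_span_unit_cochains: "cochains k A m = cs.span (unit_cochain ` faces k A m)"
proof
  show "cochains k A m \<subseteq> cs.span (unit_cochain ` faces k A m)"
  proof
    fix f assume f: "f \<in> cochains k A m"
    have "(\<Sum>S\<in>faces k A m. cscale (f S) (unit_cochain S)) \<in> cs.span (unit_cochain ` faces k A m)"
      by (intro cs.span_sum cs.span_scale cs.span_base) auto
    then show "f \<in> cs.span (unit_cochain ` faces k A m)"
      using cochain_eq_sum_unit_cochains[OF f] by simp
  qed
  show "cs.span (unit_cochain ` faces k A m) \<subseteq> cochains k A m"
    using subspace_cochains unit_cochain_in_cochains by (intro cs.span_minimal) auto
qed

lemma finite_unit_cochains: "finite (unit_cochain ` faces k A m)"
  using finite_faces[OF finite_A] by simp

lemma inj_unit_cochain: "inj unit_cochain"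
  by (auto simp: inj_def unit_cochain_def fun_eq_iff split: if_splits)

lemma independent_unit_cochains: "cs.independent (unit_cochain ` faces k A m)"
proof (rule cs.independent_if_scalars_zero[OF finite_unit_cochains])
  fix c x assume zero: "(\<Sum>x\<in>unit_cochain ` faces k A m. cscale (c x) x) = 0"
    and x: "x \<in> unit_cochain ` faces k A m"
  then obtain S where S: "S \<in> faces k A m" "x = unit_cochain S" by auto
  have "0 = (\<Sum>T\<in>faces k A m. c (unit_cochain T) * unit_cochain T S)"
    using fun_cong[OF zero, of S] inj_unit_cochain
    by (simp add: sum_fun_apply cscale_apply sum.reindex inj_on_def inj_def)
  also have "\<dots> = c (unit_cochain S)"
    using S(1) finite_faces[OF finite_A] by (simp add: unit_cochain_def sum.delta if_distrib[of "\<lambda>x. _ * x"] eq_commute cong: if_cong)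
  finally show "c x = 0" using S by simp
qed

lemma dim_cochains: "cs.dim (cochains k A m) = card (faces k A m)"
  using independent_unit_cochains card_image[OF inj_on_subset[OF inj_unit_cochain]]
  by (simp add: cochains_eq_span_unit_cochains cs.dim_eq_card_independent)

lemma linear_cobound: "fun_linear (cobound k A m)"
  by (rule fun_linearI)
     (simp_all add: cobound_def fun_eq_iff cscale_def distrib_left sum.distrib sum_distrib_left mult.left_commute)

lemma linear_cobound_adj: "fun_linear (cobound_adj k A m)"
  by (rule fun_linearI)
     (simp_all add: cobound_adj_def fun_eq_iff cscale_def distrib_left sum.distrib sum_distrib_left mult.left_commute)

lemma linear_lap_down: "fun_linear (lap_down k A m)"
  using fun_linear_compose[OF linear_cobound linear_cobound_adj] by (simp add: lap_down_def[abs_def])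

lemma linear_lap_up: "fun_linear (lap_up k A m)"
  using fun_linear_compose[OF linear_cobound_adj linear_cobound] by (simp add: lap_up_def[abs_def])

lemma linear_lap: "fun_linear (lap k A m)"
  using cs.linear_compose_add[OF linear_lap_down linear_lap_up] by (simp add: lap_def[abs_def] plus_fun_def)

lemma cobound_in_cochains: "cobound k A m f \<in> cochains k A (Suc m)"
  by (simp add: cochains_def cobound_def)

lemma cobound_adj_in_cochains: "cobound_adj k A m f \<in> cochains k A m"
  by (simp add: cochains_def cobound_adj_def)

lemma lap_in_cochains: "lap k A (Suc m) f \<in> cochains k A (Suc m)"
  by (simp add: lap_def lap_down_def lap_up_def cochains_def cobound_def cobound_adj_def)

subsection \<open>An eigenbasis of the Laplacian\<close>

definition base :: 'a where "base = (SOME g. g \<in> A)"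

lemma base_in_A: "base \<in> A"
  unfolding base_def using A_nonempty by (simp add: some_in_eq)

definition label :: "'a vtx set \<Rightarrow> nat \<Rightarrow> 'a" where
  "label S i = (SOME g. (i, g) \<in> S)"

definition face_of :: "nat set \<Rightarrow> (nat \<Rightarrow> 'a) \<Rightarrow> 'a vtx set" where
  "face_of I p = (\<lambda>i. (i, p i)) ` I"

lemma label_eq: "S \<in> faces k A m \<Longrightarrow> (i, g) \<in> S \<Longrightarrow> label S i = g"
  unfolding label_def by (metis face_fst_eqD fst_conv snd_conv someI)

lemma label_in_face: "S \<in> faces k A m \<Longrightarrow> i \<in> fst ` S \<Longrightarrow> (i, label S i) \<in> S"
  using label_eq by fastforce

lemma label_in_A: "S \<in> faces k A m \<Longrightarrow> i \<in> fst ` S \<Longrightarrow> label S i \<in> A"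
  using label_in_face face_subset_join by (fastforce simp: join_vertices_def)

lemma fst_face_of: "fst ` face_of I p = I"
  by (force simp: face_of_def image_image)

lemma face_of_in_faces:
  "I \<subseteq> {1..k+1} \<Longrightarrow> card I = m \<Longrightarrow> (\<And>i. i \<in> I \<Longrightarrow> p i \<in> A) \<Longrightarrow> face_of I p \<in> faces k A m"
  by (auto simp: faces_def face_of_def join_vertices_def card_image inj_on_def)

lemma label_face_of: "face_of I p \<in> faces k A m \<Longrightarrow> i \<in> I \<Longrightarrow> label (face_of I p) i = p i"
  by (rule label_eq) (auto simp: face_of_def)

lemma face_of_label: "S \<in> faces k A m \<Longrightarrow> face_of (fst ` S) (label S) = S"
  by (force simp: face_of_def label_eq label_in_face)

lemma face_eqI:
  assumes "S \<in> faces k A m" "T \<in> faces k A m" "fst ` S = fst ` T"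
    and "\<And>i. i \<in> fst ` S \<Longrightarrow> label S i = label T i"
  shows "S = T"
  using face_of_label[OF assms(1)] face_of_label[OF assms(2)] assms(3,4)
  by (metis (no_types, lifting) face_of_def image_cong)

definition basis_fun :: "'a \<Rightarrow> 'a \<Rightarrow> real" where
  "basis_fun h x = (if h = base then 1 else (if x = h then 1 else 0) - (if x = base then 1 else 0))"

definition eigencochain :: "nat \<Rightarrow> 'a vtx set \<Rightarrow> 'a cochain" where
  "eigencochain m \<tau> = (\<lambda>\<sigma>. if \<sigma> \<in> faces k A m \<and> fst ` \<sigma> = fst ` \<tau>
     then \<Prod>w\<in>\<sigma>. basis_fun (label \<tau> (fst w)) (snd w) else 0)"

definition base_count :: "'a vtx set \<Rightarrow> nat" where
  "base_count \<tau> = card {v \<in> \<tau>. snd v = base}"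

lemma eigencochain_in_cochains: "eigencochain m \<tau> \<in> cochains k A m"
  by (simp add: eigencochain_def cochains_def)

lemma sum_basis_fun: "h \<in> A \<Longrightarrow> (\<Sum>g\<in>A. basis_fun h g) = (if h = base then real n else 0)"
  using finite_A base_in_A by (simp add: basis_fun_def sum_subtractf sum.delta)

lemma card_base_labels:
  assumes \<sigma>: "\<sigma> \<in> faces k A m" and \<tau>: "\<tau> \<in> faces k A m" and "fst ` \<sigma> = fst ` \<tau>"
  shows "card {w \<in> \<sigma>. label \<tau> (fst w) = base} = base_count \<tau>"
  unfolding base_count_def
proof (rule bij_betw_same_card[where f = "\<lambda>w. (fst w, base)"])
  have "(\<lambda>w. (fst w, base)) ` {w \<in> \<sigma>. label \<tau> (fst w) = base} = {v \<in> \<tau>. snd v = base}"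
  proof (intro equalityI subsetI)
    fix v assume "v \<in> (\<lambda>w. (fst w, base)) ` {w \<in> \<sigma>. label \<tau> (fst w) = base}"
    then show "v \<in> {v \<in> \<tau>. snd v = base}"
      using label_in_face[OF \<tau>] assms(3) by force
  next
    fix v assume v: "v \<in> {v \<in> \<tau>. snd v = base}"
    then obtain w where "w \<in> \<sigma>" "fst w = fst v" using assms(3) by (metis (no_types, lifting) imageE image_eqI mem_Collect_eq)
    moreover have "label \<tau> (fst v) = base"
      using label_eq[OF \<tau>, of "fst v" base] v by (metis (mono_tags) mem_Collect_eq prod.collapse)
    ultimately show "v \<in> (\<lambda>w. (fst w, base)) ` {w \<in> \<sigma>. label \<tau> (fst w) = base}"
      using v by (auto intro!: image_eqI[of _ _ w] simp: prod_eq_iff)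
  qed
  moreover have "inj_on (\<lambda>w. (fst w, base)) {w \<in> \<sigma>. label \<tau> (fst w) = base}"
    using face_fst_eqD[OF \<sigma>] by (auto simp: inj_on_def)
  ultimately show "bij_betw (\<lambda>w. (fst w, base)) {w \<in> \<sigma>. label \<tau> (fst w) = base} {v \<in> \<tau>. snd v = base}"
    by (simp add: bij_betw_def)
qed

lemma sum_relabel_eigencochain:
  assumes \<tau>: "\<tau> \<in> faces k A m" and \<sigma>: "\<sigma> \<in> faces k A m" and same: "fst ` \<sigma> = fst ` \<tau>" and w: "w \<in> \<sigma>"
  shows "(\<Sum>g\<in>A. eigencochain m \<tau> (relabel \<sigma> w g)) =
    (if label \<tau> (fst w) = base then real n * eigencochain m \<tau> \<sigma> else 0)"
proof -
  let ?h = "label \<tau> (fst w)"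
  define P where "P = (\<Prod>x\<in>\<sigma> - {w}. basis_fun (label \<tau> (fst x)) (snd x))"
  have fin: "finite \<sigma>" using finite_face[OF finite_A \<sigma>] .
  have "eigencochain m \<tau> (relabel \<sigma> w g) = basis_fun ?h g * P" if "g \<in> A" for g
  proof -
    have "(fst w, g) \<notin> \<sigma> - {w}" using face_fst_eqD[OF \<sigma> _ w] by auto
    then show ?thesis
      using relabel_face[OF finite_A \<sigma> w that] same fin by (simp add: eigencochain_def P_def relabel_def)
  qed
  then have "(\<Sum>g\<in>A. eigencochain m \<tau> (relabel \<sigma> w g)) = (\<Sum>g\<in>A. basis_fun ?h g) * P"
    by (simp add: sum_distrib_right)
  also have "\<dots> = (if ?h = base then real n * P else 0)"
  proof -
    have "fst w \<in> fst ` \<tau>" using w same by (metis imageI)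
    then show ?thesis using sum_basis_fun[OF label_in_A[OF \<tau>]] by simp
  qed
  also have "\<dots> = (if ?h = base then real n * eigencochain m \<tau> \<sigma> else 0)"
    using \<sigma> same fin w by (simp add: eigencochain_def P_def prod.remove basis_fun_def)
  finally show ?thesis .
qed

lemma lap_eigencochain:
  assumes \<tau>: "\<tau> \<in> faces k A (Suc m)"
  shows "lap k A (Suc m) (eigencochain (Suc m) \<tau>) =
    cscale (real n * real (k - m + base_count \<tau>)) (eigencochain (Suc m) \<tau>)"
proof
  fix \<sigma>
  let ?\<phi> = "eigencochain (Suc m) \<tau>"
  show "lap k A (Suc m) ?\<phi> \<sigma> = cscale (real n * real (k - m + base_count \<tau>)) ?\<phi> \<sigma>"
  proof (cases "\<sigma> \<in> faces k A (Suc m) \<and> fst ` \<sigma> = fst ` \<tau>")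
    case False
    show ?thesis
    proof (cases "\<sigma> \<in> faces k A (Suc m)")
      case \<sigma>: True
      with False have other: "fst ` \<sigma> \<noteq> fst ` \<tau>" by blast
      then have "?\<phi> (relabel \<sigma> w g) = 0" if "w \<in> \<sigma>" "g \<in> A" for w g
        using relabel_face(2)[OF finite_A \<sigma> that] by (simp add: eigencochain_def)
      then show ?thesis
        using lap_apply[OF finite_A \<sigma>, of ?\<phi>] other by (simp add: eigencochain_def cscale_apply)
    next
      case False
      then show ?thesis
        using lap_in_cochains[of m ?\<phi>] by (simp add: cochains_def eigencochain_def cscale_apply)
    qed
  next
    case True
    then have \<sigma>: "\<sigma> \<in> faces k A (Suc m)" and same: "fst ` \<sigma> = fst ` \<tau>" by auto
    have "(\<Sum>w\<in>\<sigma>. \<Sum>g\<in>A. ?\<phi> (relabel \<sigma> w g)) = (\<Sum>w\<in>\<sigma>. if label \<tau> (fst w) = base then real n * ?\<phi> \<sigma> else 0)"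
      using sum_relabel_eigencochain[OF \<tau> \<sigma> same] by simp
    also have "\<dots> = real (card {w \<in> \<sigma>. label \<tau> (fst w) = base}) * (real n * ?\<phi> \<sigma>)"
      using finite_face[OF finite_A \<sigma>] by (simp add: sum.If_cases Int_def conj_commute)
    also have "\<dots> = real (base_count \<tau>) * (real n * ?\<phi> \<sigma>)"
      using card_base_labels[OF \<sigma> \<tau> same] by simp
    finally show ?thesis
      using lap_apply[OF finite_A \<sigma>, of ?\<phi>] by (simp add: cscale_apply ring_distribs mult_ac)
  qed
qed

text \<open>Coordinates of the point mass at x in the basis basis_fun.\<close>
definition dual_coef :: "'a \<Rightarrow> 'a \<Rightarrow> real" where
  "dual_coef x h = (if h = base then 1 / real n else (if h = x then 1 else 0) - 1 / real n)"

lemma sum_dual_coef_basis_fun: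
  assumes x: "x \<in> A" and y: "y \<in> A"
  shows "(\<Sum>h\<in>A. dual_coef x h * basis_fun h y) = (if y = x then 1 else 0)"
proof -
  let ?B = "A - {base}"
  have n: "real (card ?B) = real n - 1" "real n \<noteq> 0"
    using finite_A base_in_A A_nonempty n_pos by (simp_all add: of_nat_diff)
  have "(\<Sum>h\<in>A. dual_coef x h * basis_fun h y) =
      1 / real n + (\<Sum>h\<in>?B. dual_coef x h * ((if y = h then 1 else 0) - (if y = base then 1 else 0)))"
    using finite_A base_in_A by (simp add: sum.remove basis_fun_def dual_coef_def)
  also have "\<dots> = (if y = x then 1 else 0)"
  proof (cases "y = base")
    case True
    have "(\<Sum>h\<in>?B. dual_coef x h * ((if y = h then 1 else 0) - (if y = base then 1 else 0))) =
        - (\<Sum>h\<in>?B. dual_coef x h)"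
      using True by (simp add: sum_negf[symmetric]) (rule sum.cong; auto)
    moreover have "(\<Sum>h\<in>?B. dual_coef x h) = (if x = base then 0 else 1) - (real n - 1) / real n"
      using finite_A x n by (simp add: dual_coef_def sum_subtractf sum.delta')
    ultimately show ?thesis using True n by (auto simp: field_simps)
  next
    case False
    then have "(\<Sum>h\<in>?B. dual_coef x h * ((if y = h then 1 else 0) - (if y = base then 1 else 0))) = dual_coef x y"
      using finite_A y by (simp add: if_distrib[of "\<lambda>t. _ * t"] sum.delta' cong: if_cong)
    then show ?thesis using False by (simp add: dual_coef_def)
  qed
  finally show ?thesis .
qed

lemma eigencochain_face_of:
  assumes \<rho>: "\<rho> \<in> faces k A m" and I: "fst ` \<rho> = I" and p: "face_of I p \<in> faces k A m"
  shows "eigencochain m (face_of I p) \<rho> = (\<Prod>i\<in>I. basis_fun (p i) (label \<rho> i))"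
proof -
  have "eigencochain m (face_of I p) \<rho> = (\<Prod>w\<in>\<rho>. basis_fun (label (face_of I p) (fst w)) (snd w))"
    using \<rho> I by (simp add: eigencochain_def fst_face_of)
  also have "\<dots> = (\<Prod>w\<in>\<rho>. basis_fun (p (fst w)) (label \<rho> (fst w)))"
  proof (rule prod.cong[OF refl])
    fix w assume "w \<in> \<rho>"
    then show "basis_fun (label (face_of I p) (fst w)) (snd w) = basis_fun (p (fst w)) (label \<rho> (fst w))"
      using label_face_of[OF p, of "fst w"] label_eq[OF \<rho>, of "fst w" "snd w"] I by force
  qed
  also have "\<dots> = (\<Prod>i\<in>I. basis_fun (p i) (label \<rho> i))"
  proof -
    have "inj_on fst \<rho>" using face_fst_eqD[OF \<rho>] by (auto simp: inj_on_def)
    then show ?thesis using prod.reindex[of fst \<rho> "\<lambda>i. basis_fun (p i) (label \<rho> i)"] I by simp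
  qed
  finally show ?thesis .
qed

lemma unit_cochain_eq_sum_eigencochains:
  assumes \<sigma>: "\<sigma> \<in> faces k A m"
  defines "I \<equiv> fst ` \<sigma>"
  shows "unit_cochain \<sigma> =
    (\<Sum>p\<in>PiE I (\<lambda>_. A). cscale (\<Prod>i\<in>I. dual_coef (label \<sigma> i) (p i)) (eigencochain m (face_of I p)))"
    (is "_ = ?rhs")
proof
  fix \<rho>
  have fin: "finite I" using finite_face[OF finite_A \<sigma>] by (simp add: I_def)
  have face: "face_of I p \<in> faces k A m" if "p \<in> PiE I (\<lambda>_. A)" for p
    using that fst_face_subset[OF \<sigma>] card_fst_face[OF \<sigma>] by (intro face_of_in_faces) (auto simp: I_def)
  show "unit_cochain \<sigma> \<rho> = ?rhs \<rho>"
  proof (cases "\<rho> \<in> faces k A m \<and> fst ` \<rho> = I")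
    case True
    then have \<rho>: "\<rho> \<in> faces k A m" and I\<rho>: "fst ` \<rho> = I" by auto
    have "?rhs \<rho> = (\<Sum>p\<in>PiE I (\<lambda>_. A). \<Prod>i\<in>I. dual_coef (label \<sigma> i) (p i) * basis_fun (p i) (label \<rho> i))"
      by (simp add: sum_fun_apply cscale_apply eigencochain_face_of[OF \<rho> I\<rho> face] prod.distrib)
    also have "\<dots> = (\<Prod>i\<in>I. \<Sum>h\<in>A. dual_coef (label \<sigma> i) h * basis_fun h (label \<rho> i))"
      using fin finite_A by (subst prod_sum_PiE) auto
    also have "\<dots> = (\<Prod>i\<in>I. if label \<rho> i = label \<sigma> i then 1 else 0)"
      using label_in_A[OF \<sigma>] label_in_A[OF \<rho>] I\<rho> by (intro prod.cong refl sum_dual_coef_basis_fun) (auto simp: I_def)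
    also have "\<dots> = (if \<forall>i\<in>I. label \<rho> i = label \<sigma> i then 1 else 0)"
      using fin by (simp add: prod_zero)
    also have "\<dots> = unit_cochain \<sigma> \<rho>"
      using face_eqI[OF \<rho> \<sigma>] I\<rho> by (auto simp: unit_cochain_def I_def)
    finally show ?thesis ..
  next
    case False
    then have "\<rho> \<noteq> \<sigma>" and "eigencochain m (face_of I p) \<rho> = 0" for p
      using \<sigma> by (auto simp: eigencochain_def fst_face_of I_def)
    then show ?thesis by (simp add: sum_fun_apply cscale_apply unit_cochain_def)
  qed
qed

lemma eigencochain_basis:
  shows "cochains k A m = cs.span (eigencochain m ` faces k A m)"
    and "cs.independent (eigencochain m ` faces k A m)"
    and "inj_on (eigencochain m) (faces k A m)"
proof -
  have sub: "eigencochain m ` faces k A m \<subseteq> cochains k A m"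
    using eigencochain_in_cochains by auto
  have "unit_cochain \<sigma> \<in> cs.span (eigencochain m ` faces k A m)" if "\<sigma> \<in> faces k A m" for \<sigma>
    unfolding unit_cochain_eq_sum_eigencochains[OF that]
    using that fst_face_subset[OF that] card_fst_face[OF that]
    by (intro cs.span_sum cs.span_scale cs.span_base imageI face_of_in_faces) auto
  then have span: "cochains k A m \<subseteq> cs.span (eigencochain m ` faces k A m)"
    unfolding cochains_eq_span_unit_cochains by (intro cs.span_minimal) (auto simp: cs.subspace_span)
  then show "cochains k A m = cs.span (eigencochain m ` faces k A m)"
    using cs.span_minimal[OF sub subspace_cochains] by blast
  have "card (eigencochain m ` faces k A m) \<le> cs.dim (cochains k A m)"
    using card_image_le[OF finite_faces[OF finite_A]] by (simp add: dim_cochains)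
  note basis = independent_if_card_le_dim[OF sub span finite_imageI[OF finite_faces[OF finite_A]] this]
  show "cs.independent (eigencochain m ` faces k A m)" using basis(1) .
  show "inj_on (eigencochain m) (faces k A m)"
    using basis(2) finite_faces[OF finite_A] by (intro eq_card_imp_inj_on) (auto simp: dim_cochains)
qed

lemma base_count_le: "\<tau> \<in> faces k A m \<Longrightarrow> base_count \<tau> \<le> m"
  using card_mono[OF finite_face[OF finite_A], of \<tau> k m "{v \<in> \<tau>. snd v = base}"]
  by (auto simp: base_count_def card_face)

lemma base_count_face_of: "base_count (face_of I p) = card {i\<in>I. p i = base}"
proof -
  have "{v \<in> face_of I p. snd v = base} = (\<lambda>i. (i, p i)) ` {i\<in>I. p i = base}"
    by (auto simp: face_of_def)
  then show ?thesis by (simp add: base_count_def card_image inj_on_def)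
qed

lemma card_faces_eq_sum:
  "card {\<tau> \<in> faces k A m. P \<tau>} =
     (\<Sum>I\<in>{I. I \<subseteq> {1..k+1} \<and> card I = m}. card {p \<in> PiE I (\<lambda>_. A). P (face_of I p)})"
proof -
  let ?Is = "{I. I \<subseteq> {1..k+1} \<and> card I = m}"
  let ?S = "Sigma ?Is (\<lambda>I. {p \<in> PiE I (\<lambda>_. A). P (face_of I p)})"
  have "{\<tau> \<in> faces k A m. P \<tau>} \<subseteq> (\<lambda>(I, p). face_of I p) ` ?S"
  proof
    fix \<tau> assume "\<tau> \<in> {\<tau> \<in> faces k A m. P \<tau>}"
    then have \<tau>: "\<tau> \<in> faces k A m" "P \<tau>" by auto
    define p where "p = restrict (label \<tau>) (fst ` \<tau>)"
    have eq: "face_of (fst ` \<tau>) p = \<tau>"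
      using face_of_label[OF \<tau>(1)] by (auto simp: face_of_def p_def)
    moreover have "p \<in> PiE (fst ` \<tau>) (\<lambda>_. A)" using label_in_A[OF \<tau>(1)] by (auto simp: p_def)
    ultimately have "(fst ` \<tau>, p) \<in> ?S"
      using \<tau> fst_face_subset[OF \<tau>(1)] card_fst_face[OF \<tau>(1)] by simp
    then show "\<tau> \<in> (\<lambda>(I, p). face_of I p) ` ?S" using eq by (auto intro!: image_eqI[of _ _ "(fst ` \<tau>, p)"])
  qed
  moreover have "(\<lambda>(I, p). face_of I p) ` ?S \<subseteq> {\<tau> \<in> faces k A m. P \<tau>}"
    by (auto simp: PiE_def Pi_def intro!: face_of_in_faces)
  moreover have "inj_on (\<lambda>(I, p). face_of I p) ?S"
  proof (rule inj_onI)
    fix x y assume x: "x \<in> ?S" and y: "y \<in> ?S" and eq: "(\<lambda>(I, p). face_of I p) x = (\<lambda>(I, p). face_of I p) y"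
    obtain I p I' p' where xy: "x = (I, p)" "y = (I', p')" by force
    have "I = I'" using eq xy fst_face_of by (metis case_prod_conv)
    moreover have "p i = p' i" if "i \<in> I" for i
      using eq xy that \<open>I = I'\<close> by (auto simp: face_of_def)
    ultimately show "x = y" using x y xy by (auto intro: PiE_ext)
  qed
  ultimately have "card {\<tau> \<in> faces k A m. P \<tau>} = card ?S"
    by (metis (no_types, lifting) card_image subset_antisym)
  also have "\<dots> = (\<Sum>I\<in>?Is. card {p \<in> PiE I (\<lambda>_. A). P (face_of I p)})"
    using finite_A by (intro card_SigmaI) (auto intro: finite_subset finite_PiE)
  finally show ?thesis .
qed

lemma card_faces_base_count:
  assumes "j \<le> k"
  shows "card {\<tau> \<in> faces k A (j + 1). k - j + base_count \<tau> = t} = (k + 1 choose t) * (t choose (k - j)) * (n - 1) ^ (k + 1 - t)"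
proof (cases "k - j \<le> t")
  case False
  then have "{\<tau> \<in> faces k A (j + 1). k - j + base_count \<tau> = t} = {}" "t choose (k - j) = 0" by auto
  then show ?thesis by (simp only: card.empty mult_zero_right mult_zero_left)
next
  case True
  define s where "s = t - (k - j)"
  have t: "t = k - j + s" using True by (simp add: s_def)
  have "card {\<tau> \<in> faces k A (j + 1). k - j + base_count \<tau> = t} =
      (\<Sum>I\<in>{I. I \<subseteq> {1..k+1} \<and> card I = j + 1}. card {p \<in> PiE I (\<lambda>_. A). card {i\<in>I. p i = base} = s})"
    by (simp add: card_faces_eq_sum base_count_face_of t)
  also have "\<dots> = (\<Sum>I\<in>{I. I \<subseteq> {1..k+1} \<and> card I = j + 1}. (j + 1 choose s) * (n - 1) ^ (j + 1 - s))"
  proof (rule sum.cong[OF refl])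
    fix I assume "I \<in> {I. I \<subseteq> {1..k+1} \<and> card I = j + 1}"
    then have "finite I" "card I = j + 1" using finite_subset[of I "{1..k+1}"] by auto
    then show "card {p \<in> PiE I (\<lambda>_. A). card {i\<in>I. p i = base} = s} = (j + 1 choose s) * (n - 1) ^ (j + 1 - s)"
      using card_PiE_count_eq[OF _ finite_A base_in_A, of I s] by simp
  qed
  also have "\<dots> = (k + 1 choose (j + 1)) * (j + 1 choose s) * (n - 1) ^ (j + 1 - s)"
    using n_subsets[of "{1..k+1}" "j + 1"] by simp
  also have "\<dots> = (k + 1 choose t) * (t choose (k - j)) * (n - 1) ^ (k + 1 - t)"
  proof (cases "s \<le> j + 1")
    case True
    then show ?thesis using choose_mult_choose_eq[OF assms True] t assms by simp
  next
    case False
    then have "j + 1 choose s = 0" "k + 1 choose t = 0" using t assms by simp_all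
    then show ?thesis by (simp only: mult_zero_left mult_zero_right)
  qed
  finally show ?thesis .
qed

lemma eig_mult_lap:
  assumes "j \<le> k"
  shows "eig_mult (cochains k A (j + 1)) (lap k A (j + 1)) (real t * real n) =
    card {\<tau> \<in> faces k A (j + 1). k - j + base_count \<tau> = t}"
proof -
  have "eig_mult (cochains k A (j + 1)) (lap k A (j + 1)) (real t * real n) =
      card {\<tau> \<in> faces k A (j + 1). real n * real (k - j + base_count \<tau>) = real t * real n}"
    unfolding eig_mult_def eigencochain_basis(1)
    using lap_eigencochain[of _ j]
    by (intro dim_eigenspace_eigenbasis finite_faces finite_A eigencochain_basis linear_lap) simp
  also have "{\<tau> \<in> faces k A (j + 1). real n * real (k - j + base_count \<tau>) = real t * real n} =
      {\<tau> \<in> faces k A (j + 1). k - j + base_count \<tau> = t}"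
    using n_pos by (auto simp: mult.commute)
  finally show ?thesis .
qed

lemma eigenvalue_lap:
  assumes "j \<le> k" and "eigenvalue_on (cochains k A (j + 1)) (lap k A (j + 1)) \<mu>"
  shows "\<exists>t. k - j \<le> t \<and> t \<le> k + 1 \<and> \<mu> = real t * real n"
proof -
  obtain v where v: "v \<in> cs.span (eigencochain (j + 1) ` faces k A (j + 1))" "v \<noteq> 0"
      "lap k A (j + 1) v = cscale \<mu> v"
    using assms(2) by (auto simp: eigenvalue_on_def eigencochain_basis(1))
  have "\<exists>\<tau>\<in>faces k A (j + 1). real n * real (k - j + base_count \<tau>) = \<mu>"
    using lap_eigencochain[of _ j]
    by (intro eigenvalue_of_eigenbasis[OF finite_faces[OF finite_A] eigencochain_basis(3,2) linear_lap _ v]) simp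
  then obtain \<tau> where "\<tau> \<in> faces k A (j + 1)" "real n * real (k - j + base_count \<tau>) = \<mu>" ..
  moreover from this have "base_count \<tau> \<le> j + 1" by (simp add: base_count_le)
  ultimately show ?thesis using assms(1) by (intro exI[of _ "k - j + base_count \<tau>"]) auto
qed

subsection \<open>Hodge decomposition and the up and down Laplacians\<close>

definition cochain_inner :: "nat \<Rightarrow> 'a cochain \<Rightarrow> 'a cochain \<Rightarrow> real" where
  "cochain_inner m f g = (\<Sum>S\<in>faces k A m. f S * g S)"

lemma cochain_inner_cobound:
  "cochain_inner (Suc m) (cobound k A m f) g = cochain_inner m f (cobound_adj k A m g)"
  unfolding cochain_inner_def by (rule cobound_adjoint[OF finite_A])

lemma cochain_inner_self_eq_0:
  assumes "f \<in> cochains k A m" "cochain_inner m f f = 0"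
  shows "f = 0"
proof -
  have "\<forall>S\<in>faces k A m. f S * f S = 0"
    using assms(2) finite_faces[OF finite_A] unfolding cochain_inner_def
    by (subst (asm) sum_nonneg_eq_0_iff) auto
  then show "f = 0" using assms(1) by (auto simp: cochains_def fun_eq_iff)
qed

lemma cobound_adj_cobound_adj: "cobound_adj k A m (cobound_adj k A (Suc m) g) = 0"
proof -
  define h where "h = cobound_adj k A m (cobound_adj k A (Suc m) g)"
  have "cochain_inner m h h = cochain_inner (Suc (Suc m)) (cobound k A (Suc m) (cobound k A m h)) g"
    by (simp add: cochain_inner_cobound h_def)
  also have "\<dots> = 0" by (simp add: cobound_cobound[OF finite_A] cochain_inner_def)
  finally show ?thesis
    using cochain_inner_self_eq_0[OF cobound_adj_in_cochains] by (simp add: h_def)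
qed

lemma lap_up_cobound: "lap_up k A (Suc j) (cobound k A j w) = 0"
  by (simp add: lap_up_def cobound_cobound[OF finite_A] cs.linear_0[OF linear_cobound_adj])

lemma lap_down_cobound_adj: "lap_down k A (Suc j) (cobound_adj k A (Suc j) w) = 0"
  by (simp add: lap_down_def cobound_adj_cobound_adj cs.linear_0[OF linear_cobound])

lemma lap_down_lap_up: "lap_down k A (Suc j) (lap_up k A (Suc j) w) = 0"
  by (simp add: lap_up_def lap_down_cobound_adj)

lemma lap_up_lap_down: "lap_up k A (Suc j) (lap_down k A (Suc j) w) = 0"
  by (simp add: lap_down_def lap_up_cobound)

lemma lap_down_eq_0_imp_eq_0:
  assumes "v \<in> cobound k A j ` cochains k A j" "lap_down k A (Suc j) v = 0"
  shows "v = 0"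
proof -
  obtain w where w: "v = cobound k A j w" using assms(1) by auto
  define u where "u = cobound_adj k A j v"
  have "cochain_inner j u u = cochain_inner (Suc j) (cobound k A j u) v"
    by (simp add: cochain_inner_cobound u_def)
  also have "\<dots> = 0" using assms(2) by (simp add: u_def lap_down_def cochain_inner_def)
  finally have "u = 0" using cochain_inner_self_eq_0[OF cobound_adj_in_cochains] by (simp add: u_def)
  have "cochain_inner (Suc j) v v = cochain_inner j w u" by (simp add: cochain_inner_cobound w u_def)
  also have "\<dots> = 0" using \<open>u = 0\<close> by (simp add: cochain_inner_def)
  finally show "v = 0" using cochain_inner_self_eq_0[of v "Suc j"] w cobound_in_cochains by auto
qed

definition eigenspace :: "real \<Rightarrow> nat \<Rightarrow> 'a cochain set" where
  "eigenspace \<mu> j = {v \<in> cochains k A (Suc j). lap k A (Suc j) v = cscale \<mu> v}"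

definition down_eigenspace :: "real \<Rightarrow> nat \<Rightarrow> 'a cochain set" where
  "down_eigenspace \<mu> j = {v \<in> cobound k A j ` cochains k A j. lap_down k A (Suc j) v = cscale \<mu> v}"

definition up_eigenspace :: "real \<Rightarrow> nat \<Rightarrow> 'a cochain set" where
  "up_eigenspace \<mu> j =
    {v \<in> cobound_adj k A (Suc j) ` cochains k A (Suc (Suc j)). lap_up k A (Suc j) v = cscale \<mu> v}"

lemma down_eigenspace_subset: "down_eigenspace \<mu> j \<subseteq> eigenspace \<mu> j"
  using cobound_in_cochains by (auto simp: down_eigenspace_def eigenspace_def lap_def lap_up_cobound)

lemma up_eigenspace_subset: "up_eigenspace \<mu> j \<subseteq> eigenspace \<mu> j"
  using cobound_adj_in_cochains by (auto simp: up_eigenspace_def eigenspace_def lap_def lap_down_cobound_adj)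

lemma eigenspace_subset_span: "eigenspace \<mu> j \<subseteq> cs.span (unit_cochain ` faces k A (Suc j))"
  using cochains_eq_span_unit_cochains by (auto simp: eigenspace_def)

lemma subspace_down_eigenspace: "cs.subspace (down_eigenspace \<mu> j)"
  unfolding down_eigenspace_def
  by (intro subspace_eigenspace linear_lap_down cs.linear_subspace_image linear_cobound subspace_cochains)

lemma subspace_up_eigenspace: "cs.subspace (up_eigenspace \<mu> j)"
  unfolding up_eigenspace_def
  by (intro subspace_eigenspace linear_lap_up cs.linear_subspace_image linear_cobound_adj subspace_cochains)

lemma down_up_eigenspace_decompose:
  assumes "\<mu> \<noteq> 0" "w \<in> eigenspace \<mu> j"
  shows "cscale (1 / \<mu>) (lap_down k A (Suc j) w) \<in> down_eigenspace \<mu> j"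
    and "cscale (1 / \<mu>) (lap_up k A (Suc j) w) \<in> up_eigenspace \<mu> j"
    and "w = cscale (1 / \<mu>) (lap_down k A (Suc j) w) + cscale (1 / \<mu>) (lap_up k A (Suc j) w)"
proof -
  have lw: "lap k A (Suc j) w = cscale \<mu> w" using assms(2) by (simp add: eigenspace_def)
  have "lap_down k A (Suc j) (lap_down k A (Suc j) w) = lap_down k A (Suc j) (lap k A (Suc j) w)"
    by (simp add: lap_def cs.linear_add[OF linear_lap_down] lap_down_lap_up)
  then have "lap_down k A (Suc j) (cscale (1 / \<mu>) (lap_down k A (Suc j) w)) =
      cscale \<mu> (cscale (1 / \<mu>) (lap_down k A (Suc j) w))"
    by (simp add: lw cs.linear_scale[OF linear_lap_down] cs.scale_left_commute)
  moreover have "cscale (1 / \<mu>) (lap_down k A (Suc j) w) = cobound k A j (cscale (1 / \<mu>) (cobound_adj k A j w))"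
    by (simp add: lap_down_def cs.linear_scale[OF linear_cobound])
  ultimately show "cscale (1 / \<mu>) (lap_down k A (Suc j) w) \<in> down_eigenspace \<mu> j"
    using cs.subspace_scale[OF subspace_cochains cobound_adj_in_cochains] by (auto simp: down_eigenspace_def)
  have "lap_up k A (Suc j) (lap_up k A (Suc j) w) = lap_up k A (Suc j) (lap k A (Suc j) w)"
    by (simp add: lap_def cs.linear_add[OF linear_lap_up] lap_up_lap_down)
  then have "lap_up k A (Suc j) (cscale (1 / \<mu>) (lap_up k A (Suc j) w)) =
      cscale \<mu> (cscale (1 / \<mu>) (lap_up k A (Suc j) w))"
    by (simp add: lw cs.linear_scale[OF linear_lap_up] cs.scale_left_commute)
  moreover have "cscale (1 / \<mu>) (lap_up k A (Suc j) w) = cobound_adj k A (Suc j) (cscale (1 / \<mu>) (cobound k A (Suc j) w))"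
    by (simp add: lap_up_def cs.linear_scale[OF linear_cobound_adj])
  ultimately show "cscale (1 / \<mu>) (lap_up k A (Suc j) w) \<in> up_eigenspace \<mu> j"
    using cs.subspace_scale[OF subspace_cochains cobound_in_cochains] by (auto simp: up_eigenspace_def)
  show "w = cscale (1 / \<mu>) (lap_down k A (Suc j) w) + cscale (1 / \<mu>) (lap_up k A (Suc j) w)"
    using assms(1) lw by (simp add: lap_def[symmetric] cs.scale_right_distrib[symmetric] cs.scale_scale)
qed

lemma down_inter_up_eigenspace:
  assumes "x \<in> down_eigenspace \<mu> j" "x \<in> up_eigenspace \<mu> j"
  shows "x = 0"
proof -
  obtain a where a: "x = cobound k A j a" using assms(1) by (auto simp: down_eigenspace_def)
  obtain b where b: "x = cobound_adj k A (Suc j) b" using assms(2) by (auto simp: up_eigenspace_def)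
  have "cochain_inner (Suc j) x x = cochain_inner (Suc (Suc j)) (cobound k A (Suc j) (cobound k A j a)) b"
    using a b by (metis cochain_inner_cobound)
  also have "\<dots> = 0" by (simp add: cobound_cobound[OF finite_A] cochain_inner_def)
  finally show "x = 0" using cochain_inner_self_eq_0[of x "Suc j"] a cobound_in_cochains by auto
qed

lemma dim_eigenspace_eq_add:
  assumes "\<mu> \<noteq> 0"
  shows "cs.dim (eigenspace \<mu> j) = cs.dim (down_eigenspace \<mu> j) + cs.dim (up_eigenspace \<mu> j)"
proof (rule dim_direct_sum[OF subspace_down_eigenspace subspace_up_eigenspace down_eigenspace_subset
      up_eigenspace_subset _ _ eigenspace_subset_span finite_unit_cochains])
  fix w assume "w \<in> eigenspace \<mu> j"
  then show "\<exists>u\<in>down_eigenspace \<mu> j. \<exists>u'\<in>up_eigenspace \<mu> j. w = u + u'"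
    using down_up_eigenspace_decompose[OF assms] by blast
qed (rule down_inter_up_eigenspace)

lemma cobound_up_eigenspace:
  assumes "\<mu> \<noteq> 0"
  shows "cobound k A (Suc j) ` up_eigenspace \<mu> j = down_eigenspace \<mu> (Suc j)"
proof (intro equalityI subsetI)
  fix y assume "y \<in> cobound k A (Suc j) ` up_eigenspace \<mu> j"
  then obtain v where v: "v \<in> up_eigenspace \<mu> j" "y = cobound k A (Suc j) v" by auto
  then have "v \<in> cochains k A (Suc j)" using cobound_adj_in_cochains by (auto simp: up_eigenspace_def)
  moreover have "lap_down k A (Suc (Suc j)) y = cscale \<mu> y"
    using v by (simp add: lap_down_def up_eigenspace_def lap_up_def[symmetric] cs.linear_scale[OF linear_cobound])
  ultimately show "y \<in> down_eigenspace \<mu> (Suc j)" using v(2) by (auto simp: down_eigenspace_def)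
next
  fix y assume y: "y \<in> down_eigenspace \<mu> (Suc j)"
  then have ly: "cobound k A (Suc j) (cobound_adj k A (Suc j) y) = cscale \<mu> y"
    by (simp add: down_eigenspace_def lap_down_def)
  define v where "v = cobound_adj k A (Suc j) (cscale (1 / \<mu>) y)"
  have Dv: "cobound k A (Suc j) v = y"
    using assms ly by (simp add: v_def cs.linear_scale[OF linear_cobound] cs.linear_scale[OF linear_cobound_adj])
  have "y \<in> cochains k A (Suc (Suc j))" using y cobound_in_cochains by (auto simp: down_eigenspace_def)
  then have "cscale (1 / \<mu>) y \<in> cochains k A (Suc (Suc j))" by (rule cs.subspace_scale[OF subspace_cochains])
  moreover have "lap_up k A (Suc j) v = cobound_adj k A (Suc j) y" by (simp add: lap_up_def Dv)
  then have "lap_up k A (Suc j) v = cscale \<mu> v"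
    using assms by (simp add: v_def cs.linear_scale[OF linear_cobound_adj])
  ultimately have "v \<in> up_eigenspace \<mu> j" by (auto simp: up_eigenspace_def v_def)
  then show "y \<in> cobound k A (Suc j) ` up_eigenspace \<mu> j" using Dv by blast
qed

lemma dim_up_eigenspace_eq_down:
  assumes "\<mu> \<noteq> 0"
  shows "cs.dim (up_eigenspace \<mu> j) = cs.dim (down_eigenspace \<mu> (Suc j))"
proof -
  have "inj_on (cobound k A (Suc j)) (up_eigenspace \<mu> j)"
  proof (rule inj_onI)
    fix v v' assume "v \<in> up_eigenspace \<mu> j" "v' \<in> up_eigenspace \<mu> j"
      and "cobound k A (Suc j) v = cobound k A (Suc j) v'"
    then have "cscale \<mu> v = cscale \<mu> v'" by (simp add: up_eigenspace_def lap_up_def)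
    then show "v = v'" using assms by simp
  qed
  moreover have "up_eigenspace \<mu> j \<subseteq> cs.span (unit_cochain ` faces k A (Suc j))"
    using up_eigenspace_subset eigenspace_subset_span by blast
  ultimately have "cs.dim (cobound k A (Suc j) ` up_eigenspace \<mu> j) = cs.dim (up_eigenspace \<mu> j)"
    by (rule dim_image_inj_on[OF linear_cobound subspace_up_eigenspace _ _ finite_unit_cochains])
  then show ?thesis using cobound_up_eigenspace[OF assms] by simp
qed

definition vertex_ones :: "'a cochain" where
  "vertex_ones = cobound k A 0 (unit_cochain {})"

lemma vertex_ones_apply: "vertex_ones T = (if T \<in> faces k A 1 then 1 else 0)"
proof (cases "T \<in> faces k A 1")
  case True
  then obtain v where "T = {v}" using card_face[OF True] by (metis card_1_singletonE)
  then show ?thesis using True by (simp add: vertex_ones_def cobound_def unit_cochain_def vsign_singleton)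
qed (simp add: vertex_ones_def cobound_def)

lemma vertex_ones_neq_0: "vertex_ones \<noteq> 0"
proof -
  have "{(1, base)} \<in> faces k A 1"
    using base_in_A by (simp add: singleton_face_iff join_vertices_def)
  then have "vertex_ones {(1, base)} = 1" by (simp add: vertex_ones_apply)
  then show ?thesis by auto
qed

lemma lap_down_vertex_ones: "lap_down k A (Suc 0) vertex_ones = cscale (real ((k + 1) * n)) vertex_ones"
proof -
  have "cobound_adj k A 0 vertex_ones = cscale (real ((k + 1) * n)) (unit_cochain {})"
  proof
    fix S
    have "{v \<in> join_vertices k A - {}. insert v {} \<in> faces k A (0 + 1)} = join_vertices k A"
      by (auto simp: singleton_face_iff)
    then have "cobound_adj k A 0 vertex_ones {} = real (card (join_vertices k A))"
      by (simp add: cobound_adj_def faces_0[OF finite_A] vsign_singleton vertex_ones_apply singleton_face_iff)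
    then show "cobound_adj k A 0 vertex_ones S = cscale (real ((k + 1) * n)) (unit_cochain {}) S"
      by (simp add: card_join_vertices cscale_apply unit_cochain_def cobound_adj_def faces_0[OF finite_A])
  qed
  then show ?thesis
    by (simp add: lap_down_def cs.linear_scale[OF linear_cobound] vertex_ones_def)
qed

lemma image_cobound_0: "cobound k A 0 ` cochains k A 0 = cs.span {vertex_ones}"
proof -
  have "cochains k A 0 = range (\<lambda>c. cscale c (unit_cochain {}))"
    by (simp add: cochains_eq_span_unit_cochains faces_0[OF finite_A] cs.span_singleton)
  then show ?thesis
    by (auto simp: cs.span_singleton vertex_ones_def cs.linear_scale[OF linear_cobound] image_iff)
qed

lemma dim_down_eigenspace_0:
  "cs.dim (down_eigenspace \<mu> 0) = (if \<mu> = real ((k + 1) * n) then 1 else 0)"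
proof -
  have "cs.dim (down_eigenspace \<mu> 0) = card {b \<in> {vertex_ones}. real ((k + 1) * n) = \<mu>}"
    unfolding down_eigenspace_def image_cobound_0
    using lap_down_vertex_ones vertex_ones_neq_0 dim_eigenspace_eigenbasis[of "{vertex_ones}" id]
    by (simp add: linear_lap_down)
  then show ?thesis by auto
qed

lemma dim_down_eigenspace:
  "j \<le> k \<Longrightarrow> 1 \<le> t \<Longrightarrow>
    cs.dim (down_eigenspace (real t * real n) j) = (k + 1 choose t) * (t - 1 choose (k - j)) * (n - 1) ^ (k + 1 - t)"
proof (induction j)
  case 0
  have "real t * real n = real ((k + 1) * n) \<longleftrightarrow> t = k + 1"
    using n_pos by (metis of_nat_eq_iff of_nat_mult mult_cancel_right neq0_conv)
  moreover have "(k + 1 choose t) * (t - 1 choose k) = (if t = k + 1 then 1 else 0)"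
    using "0.prems" by (cases "t \<le> k") auto
  ultimately show ?case by (simp add: dim_down_eigenspace_0)
next
  case (Suc j)
  have \<mu>: "real t * real n \<noteq> 0" using Suc.prems n_pos by simp
  obtain t' where t': "t = Suc t'" using Suc.prems by (cases t) auto
  obtain r where r: "k - j = Suc r" "k - Suc j = r" using Suc.prems by (cases "k - j") auto
  have "cs.dim (down_eigenspace (real t * real n) (Suc j)) =
      cs.dim (eigenspace (real t * real n) j) - cs.dim (down_eigenspace (real t * real n) j)"
    using dim_up_eigenspace_eq_down[OF \<mu>] dim_eigenspace_eq_add[OF \<mu>, of j] by simp
  also have "\<dots> = (k + 1 choose t) * ((t' choose r) + (t' choose Suc r)) * (n - 1) ^ (k + 1 - t)
                 - (k + 1 choose t) * (t' choose Suc r) * (n - 1) ^ (k + 1 - t)"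
    using Suc eig_mult_lap[of j t] card_faces_base_count[of j t] t' r
    by (simp add: eig_mult_def eigenspace_def del: Suc_eq_plus1)
  also have "\<dots> = (k + 1 choose t) * (t - 1 choose (k - Suc j)) * (n - 1) ^ (k + 1 - t)"
    using t' r by (simp add: distrib_left distrib_right)
  finally show ?case .
qed

lemma dim_up_eigenspace:
  assumes "j < k" "1 \<le> t"
  shows "cs.dim (up_eigenspace (real t * real n) j) = (k + 1 choose t) * (t - 1 choose (k - j - 1)) * (n - 1) ^ (k + 1 - t)"
  using dim_up_eigenspace_eq_down[of "real t * real n" j] dim_down_eigenspace[of "Suc j" t] assms n_pos by simp

lemma spectrum_lap:
  assumes "j \<le> k"
  shows "(\<forall>\<mu>. eigenvalue_on (cochains k A (j+1)) (lap k A (j+1)) \<mu>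
              \<longrightarrow> (\<exists>t. k - j \<le> t \<and> t \<le> k + 1 \<and> \<mu> = real t * real n)) \<and>
      (\<forall>t. k - j \<le> t \<and> t \<le> k + 1 \<longrightarrow>
         eig_mult (cochains k A (j+1)) (lap k A (j+1)) (real t * real n)
           = (k+1 choose t) * (t choose (k-j)) * (n-1)^(k+1-t))"
  using eigenvalue_lap[OF assms] eig_mult_lap[OF assms] card_faces_base_count[OF assms] by simp

lemma spectrum_lap_down:
  assumes "j \<le> k"
  shows "(\<forall>\<mu>. eigenvalue_on (cobound k A j ` cochains k A j) (lap_down k A (j+1)) \<mu>
              \<longrightarrow> (\<exists>t. k - j + 1 \<le> t \<and> t \<le> k + 1 \<and> \<mu> = real t * real n)) \<and>
      (\<forall>t. k - j + 1 \<le> t \<and> t \<le> k + 1 \<longrightarrow>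
         eig_mult (cobound k A j ` cochains k A j) (lap_down k A (j+1)) (real t * real n)
           = (k+1 choose t) * ((t-1) choose (k-j)) * (n-1)^(k+1-t))"
proof (intro conjI allI impI)
  fix \<mu> assume "eigenvalue_on (cobound k A j ` cochains k A j) (lap_down k A (j+1)) \<mu>"
  then obtain v where v: "v \<in> cobound k A j ` cochains k A j" "v \<noteq> 0" "lap_down k A (Suc j) v = cscale \<mu> v"
    by (auto simp: eigenvalue_on_def)
  then have "v \<in> eigenspace \<mu> j" using down_eigenspace_subset by (auto simp: down_eigenspace_def)
  then obtain t where t: "k - j \<le> t" "t \<le> k + 1" "\<mu> = real t * real n"
    using eigenvalue_lap[OF assms] v(2) by (auto simp: eigenvalue_on_def eigenspace_def)
  moreover have "t \<noteq> k - j"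
  proof
    assume "t = k - j"
    have "t \<noteq> 0" using v lap_down_eq_0_imp_eq_0 t(3) by fastforce
    moreover have "t - 1 choose (k - j) = 0" using \<open>t = k - j\<close> \<open>t \<noteq> 0\<close> by simp
    ultimately have "cs.dim (down_eigenspace \<mu> j) = 0"
      using dim_down_eigenspace[OF assms, of t] t(3) by simp
    moreover have "v \<in> down_eigenspace \<mu> j" using v by (simp add: down_eigenspace_def)
    moreover have "down_eigenspace \<mu> j \<subseteq> cs.span (unit_cochain ` faces k A (Suc j))"
      using down_eigenspace_subset eigenspace_subset_span by blast
    ultimately show False
      using dim_neq_0[OF _ finite_unit_cochains _ v(2)] by blast
  qed
  ultimately show "\<exists>t. k - j + 1 \<le> t \<and> t \<le> k + 1 \<and> \<mu> = real t * real n"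
    by (intro exI[of _ t]) auto
next
  fix t assume "k - j + 1 \<le> t \<and> t \<le> k + 1"
  then show "eig_mult (cobound k A j ` cochains k A j) (lap_down k A (j+1)) (real t * real n)
           = (k+1 choose t) * ((t-1) choose (k-j)) * (n-1)^(k+1-t)"
    using dim_down_eigenspace[OF assms, of t] by (simp add: eig_mult_def down_eigenspace_def)
qed

lemma spectrum_lap_up:
  assumes "j < k"
  shows "(\<forall>\<mu>. eigenvalue_on (cobound_adj k A (j+1) ` cochains k A (j+2)) (lap_up k A (j+1)) \<mu>
              \<longrightarrow> (\<exists>t. k - j \<le> t \<and> t \<le> k + 1 \<and> \<mu> = real t * real n)) \<and>
      (\<forall>t. k - j \<le> t \<and> t \<le> k + 1 \<longrightarrow>
         eig_mult (cobound_adj k A (j+1) ` cochains k A (j+2)) (lap_up k A (j+1)) (real t * real n)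
           = (k+1 choose t) * ((t-1) choose (k-j-1)) * (n-1)^(k+1-t))"
proof (intro conjI allI impI)
  fix \<mu> assume "eigenvalue_on (cobound_adj k A (j+1) ` cochains k A (j+2)) (lap_up k A (j+1)) \<mu>"
  then obtain v where "v \<in> up_eigenspace \<mu> j" "v \<noteq> 0"
    by (auto simp: eigenvalue_on_def up_eigenspace_def numeral_2_eq_2)
  moreover have "up_eigenspace \<mu> j \<subseteq> eigenspace \<mu> j" by (rule up_eigenspace_subset)
  ultimately have "eigenvalue_on (cochains k A (j+1)) (lap k A (j+1)) \<mu>"
    unfolding eigenvalue_on_def eigenspace_def by auto
  then show "\<exists>t. k - j \<le> t \<and> t \<le> k + 1 \<and> \<mu> = real t * real n"
    using eigenvalue_lap assms by simp
next
  fix t assume "k - j \<le> t \<and> t \<le> k + 1"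
  then have "1 \<le> t" using assms by linarith
  then show "eig_mult (cobound_adj k A (j+1) ` cochains k A (j+2)) (lap_up k A (j+1)) (real t * real n)
           = (k+1 choose t) * ((t-1) choose (k-j-1)) * (n-1)^(k+1-t)"
    using dim_up_eigenspace[OF assms] by (simp add: eig_mult_def up_eigenspace_def numeral_2_eq_2)
qed

end

theorem proposition3p2:
  fixes G :: "('a, 'b) monoid_scheme" and k n :: nat
  assumes "group G" and "finite (carrier G)" and "order G = n" and "k \<ge> 1"
  shows
  \<comment> \<open>(i) L_j on C^j, 0 \<le> j \<le> k (faces with j+1 vertices)\<close>
   "(\<forall>j\<le>k.
      (\<forall>\<mu>. eigenvalue_on (cochains k (carrier G) (j+1)) (lap k (carrier G) (j+1)) \<mu>
              \<longrightarrow> (\<exists>t. k - j \<le> t \<and> t \<le> k + 1 \<and> \<mu> = real t * real n)) \<and>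
      (\<forall>t. k - j \<le> t \<and> t \<le> k + 1 \<longrightarrow>
         eig_mult (cochains k (carrier G) (j+1)) (lap k (carrier G) (j+1)) (real t * real n)
           = (k+1 choose t) * (t choose (k-j)) * (n-1)^(k+1-t)))
   \<and>
  \<comment> \<open>(ii) L_j^- on im d_{j-1}, 0 \<le> j \<le> k\<close>
   (\<forall>j\<le>k.
      (\<forall>\<mu>. eigenvalue_on (cobound k (carrier G) j ` cochains k (carrier G) j)
                (lap_down k (carrier G) (j+1)) \<mu>
              \<longrightarrow> (\<exists>t. k - j + 1 \<le> t \<and> t \<le> k + 1 \<and> \<mu> = real t * real n)) \<and>
      (\<forall>t. k - j + 1 \<le> t \<and> t \<le> k + 1 \<longrightarrow>
         eig_mult (cobound k (carrier G) j ` cochains k (carrier G) j)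
           (lap_down k (carrier G) (j+1)) (real t * real n)
           = (k+1 choose t) * ((t-1) choose (k-j)) * (n-1)^(k+1-t)))
   \<and>
  \<comment> \<open>(ii) L_j^+ on im d_j^*, 0 \<le> j \<le> k-1\<close>
   (\<forall>j<k.
      (\<forall>\<mu>. eigenvalue_on (cobound_adj k (carrier G) (j+1) ` cochains k (carrier G) (j+2))
                (lap_up k (carrier G) (j+1)) \<mu>
              \<longrightarrow> (\<exists>t. k - j \<le> t \<and> t \<le> k + 1 \<and> \<mu> = real t * real n)) \<and>
      (\<forall>t. k - j \<le> t \<and> t \<le> k + 1 \<longrightarrow>
         eig_mult (cobound_adj k (carrier G) (j+1) ` cochains k (carrier G) (j+2))
           (lap_up k (carrier G) (j+1)) (real t * real n)
           = (k+1 choose t) * ((t-1) choose (k-j-1)) * (n-1)^(k+1-t)))"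
proof -
  interpret Y: join_complex k "carrier G"
    using assms(1,2) group.is_monoid monoid.one_closed by unfold_locales blast+
  have n: "n = card (carrier G)" using assms(3) by (simp add: order_def)
  show ?thesis
    unfolding n using Y.spectrum_lap Y.spectrum_lap_down Y.spectrum_lap_up by blast
qed

end
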